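(* Let $(a_n)_{\mathrm c}=[a_{n\varepsilon}]_{\mathrm c}=[\hat a_{n\varepsilon}]_{\mathrm c}\in\widetilde{\mathbb C}_{\mathrm c}$, $z=[z_\varepsilon]=[\hat z_\varepsilon]\in\widetilde{\mathbb C}$ and $c=[c_\varepsilon]=[\hat c_\varepsilon]\in\widetilde{\mathbb C}$, and assume $z\in S((a_n)_{\mathrm c},c)$. Then: (i) the representatives $(a_{n\varepsilon})_{n,\varepsilon}$, $(z_\varepsilon)$, $(c_\varepsilon)$ (and likewise any other choice of representatives) satisfy all the conditions (a), (b), (c) in the definition of the set of convergence; (ii) $[a_{n\varepsilon}(z_\varepsilon-c_\varepsilon)^n]_{\mathrm s}=[\hat a_{n\varepsilon}(\hat z_\varepsilon-\hat c_\varepsilon)^n]_{\mathrm s}$ in $\widetilde{\mathbb C}_{\mathrm s}$.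
   Context: Fix $I=(0,1]$ and a gauge $\rho=(\rho_\varepsilon)_{\varepsilon\in I}$ with $\rho_\varepsilon\in I$ and $\rho_\varepsilon\to0$ as $\varepsilon\to0$. "$\forall^0\varepsilon$" means "for all sufficiently small $\varepsilon\in I$". A net $(x_\varepsilon)\in\mathbb C^I$ is $\rho$-moderate ($(x_\varepsilon)\in\mathbb C_\rho$) if $\exists N\in\mathbb N\,\forall^0\varepsilon:|x_\varepsilon|\le\rho_\varepsilon^{-N}$, and $\rho$-negligible if $\forall q\in\mathbb N\,\forall^0\varepsilon:|x_\varepsilon|\le\rho_\varepsilon^q$. $\widetilde{\mathbb C}:=\mathbb C_\rho/\{\text{negligible nets}\}$ with classes $[x_\varepsilon]$; $\widetilde{\mathbb R}\subseteq\widetilde{\mathbb C}$ consists of classes of real moderate nets; $\mathrm d\rho:=[\rho_\varepsilon]$, $|[z_\varepsilon]|:=[|z_\varepsilon|]$. On $\widetilde{\mathbb R}$: $[x_\varepsilon]\le[y_\varepsilon]$ iff $x_\varepsilon\le y_\varepsilon+z_\varepsilon$ $\forall^0\varepsilon$ for some negligible $(z_\varepsilon)$; $x<y$ iff $\exists m\,\forall^0\varepsilon:y_\varepsilon-x_\varepsilon>\rho_\varepsilon^m$. Hypernatural numbers: $\widetilde{\mathbb N}:=\{[n_\varepsilon]\in\widetilde{\mathbb R}:n_\varepsilon\in\mathbb N\ \forall\varepsilon\}$; for each $N\in\widetilde{\mathbb N}$ a representative $(\mathrm{ni}(N)_\varepsilon)$ with all $\mathrm{ni}(N)_\varepsilon\in\mathbb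 N$ is fixed. Hyperlimit: $l=\lim_{n\in\widetilde{\mathbb N}}a_n$ means $\forall q\,\exists M\in\widetilde{\mathbb N}\,\forall n\in\widetilde{\mathbb N}:n\ge M\Rightarrow|a_n-l|<\mathrm d\rho^q$. Hyperseries: a net $(a_{n\varepsilon})_{n\in\mathbb N,\varepsilon\in I}$ is moderate over hypersums if for every $N\in\widetilde{\mathbb N}$ the net $(\sum_{n=0}^{\mathrm{ni}(N)_\varepsilon}a_{n\varepsilon})_\varepsilon$ is $\rho$-moderate; two such nets are equivalent if for all $N,M\in\widetilde{\mathbb N}$ the net $(\sum_{n=\mathrm{ni}(N)_\varepsilon}^{\mathrm{ni}(M)_\varepsilon}(a_{n\varepsilon}-\bar a_{n\varepsilon}))_\varepsilon$ is negligible; the quotient is $\widetilde{\mathbb C}_{\mathrm s}$ with classes $[a_{n\varepsilon}]_{\mathrm s}$. $\sum_{n=N}^Ma_n:=[\sum_{n=\mathrm{ni}(N)_\varepsilon}^{\mathrm{ni}(M)_\varepsilon}a_{n\varepsilon}]$, and $\sum_{n\in\widetilde{\mathbb N}}a_n:=\lim_{N\in\widetilde{\mathbb N}}\sum_{n=0}^Na_n$ when this hyperlimit exists (convergence). Coefficients: $\widetilde{\mathbb C}_{\mathrm c}$ is the set of weakly $\rho$-moderate nets $(a_{n\varepsilon})$ ($\exists Q,R\in\mathbb N\,\forall^0\varepsilon\,\forall n\in\mathbb N:|a_{n\varepsilon}|\le\rho_\varepsilon^{-nQ-R}$) modulo strong equivalence ($\forall q,r\,\forall^0\varepsilon\,\forall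 n:|a_{n\varepsilon}-\bar a_{n\varepsilon}|\le\rho_\varepsilon^{nq+r}$), classes $(a_n)_{\mathrm c}=[a_{n\varepsilon}]_{\mathrm c}$. $\widetilde{\mathbb R}_\infty:=(\mathbb R\cup\{\pm\infty\})^I/\sim_\rho$ (same negligibility relation), ordered by $x\le y$ iff some representatives satisfy $x_\varepsilon\le y_\varepsilon$ $\forall^0\varepsilon$, and for $x\in\widetilde{\mathbb R}$, $x<y$ iff $\exists m\,\forall^0\varepsilon:y_\varepsilon>x_\varepsilon+\rho_\varepsilon^m$. Radius: $\mathrm{rad}(a_n)_{\mathrm c}:=[(\limsup_n|a_{n\varepsilon}|^{1/n})^{-1}]\in\widetilde{\mathbb R}_\infty$. Set of convergence: $S((a_n)_{\mathrm c},c)$ is the set of $z\in\widetilde{\mathbb C}$ with $|z-c|<\mathrm{rad}(a_n)_{\mathrm c}$ for which there exist representatives $z=[z_\varepsilon]$, $c=[c_\varepsilon]$, $(a_n)_{\mathrm c}=[a_{n\varepsilon}]_{\mathrm c}$ such that: (a) the net $(a_{n\varepsilon}(z_\varepsilon-c_\varepsilon)^n)_{n,\varepsilon}$ is moderate over hypersums (its class $(a_n(z-c)^n)_n\in\widetilde{\mathbb C}_{\mathrm s}$ is called a formal hyperpower series); (b) the hyperseries $\sum_{n\in\widetilde{\mathbb N}}a_n(z-c)^n$ converges and equals $[\sum_{n=0}^{\infty}a_{n\varepsilon}(z_\varepsilon-c_\varepsilon)^n]$ (these ordinary series converging for small $\varepsilon$ to a moderate net); (c) for every representative $z=[\hat z_\varepsilon]$,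 the net $(\sum_{n\ge1}na_{n\varepsilon}(\hat z_\varepsilon-c_\varepsilon)^{n-1})_\varepsilon$ is $\rho$-moderate. *)

theory Defs
  imports "HOL-Analysis.Analysis" "HOL-Library.Extended_Real"
begin

text \<open>Nets are functions on real (only eps in (0,1], eps -> 0+ matter);
  "for all sufficiently small eps" is  eventually _ (at_right 0).\<close>

definition rho_gauge :: "(real \<Rightarrow> real) \<Rightarrow> bool" where
  "rho_gauge \<rho> \<longleftrightarrow> (\<forall>\<epsilon>\<in>{0<..1}. 0 < \<rho> \<epsilon> \<and> \<rho> \<epsilon> \<le> 1) \<and> (\<rho> \<longlongrightarrow> 0) (at_right 0)"

definition rho_moderate :: "(real \<Rightarrow> real) \<Rightarrow> (real \<Rightarrow> 'a::real_normed_vector) \<Rightarrow> bool" where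
  "rho_moderate \<rho> x \<longleftrightarrow> (\<exists>N::nat. \<forall>\<^sub>F \<epsilon> in at_right 0. norm (x \<epsilon>) \<le> inverse (\<rho> \<epsilon> ^ N))"

definition rho_negligible :: "(real \<Rightarrow> real) \<Rightarrow> (real \<Rightarrow> 'a::real_normed_vector) \<Rightarrow> bool" where
  "rho_negligible \<rho> x \<longleftrightarrow> (\<forall>q::nat. \<forall>\<^sub>F \<epsilon> in at_right 0. norm (x \<epsilon>) \<le> \<rho> \<epsilon> ^ q)"

definition rho_eq :: "(real \<Rightarrow> real) \<Rightarrow> (real \<Rightarrow> 'a::real_normed_vector) \<Rightarrow> (real \<Rightarrow> 'a) \<Rightarrow> bool" where
  "rho_eq \<rho> x y \<longleftrightarrow> rho_negligible \<rho> (\<lambda>\<epsilon>. x \<epsilon> - y \<epsilon>)"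

definition rt_le :: "(real \<Rightarrow> real) \<Rightarrow> (real \<Rightarrow> real) \<Rightarrow> (real \<Rightarrow> real) \<Rightarrow> bool" where
  "rt_le \<rho> x y \<longleftrightarrow> (\<exists>z. rho_negligible \<rho> z \<and> (\<forall>\<^sub>F \<epsilon> in at_right 0. x \<epsilon> \<le> y \<epsilon> + z \<epsilon>))"

definition rt_lt :: "(real \<Rightarrow> real) \<Rightarrow> (real \<Rightarrow> real) \<Rightarrow> (real \<Rightarrow> real) \<Rightarrow> bool" where
  "rt_lt \<rho> x y \<longleftrightarrow> (\<exists>m::nat. \<forall>\<^sub>F \<epsilon> in at_right 0. y \<epsilon> - x \<epsilon> > \<rho> \<epsilon> ^ m)"

definition rt_lt_inf :: "(real \<Rightarrow> real) \<Rightarrow> (real \<Rightarrow> real) \<Rightarrow> (real \<Rightarrow> ereal) \<Rightarrow> bool" where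
  "rt_lt_inf \<rho> x y \<longleftrightarrow> (\<exists>m::nat. \<forall>\<^sub>F \<epsilon> in at_right 0. y \<epsilon> > ereal (x \<epsilon> + \<rho> \<epsilon> ^ m))"

definition hypernat :: "(real \<Rightarrow> real) \<Rightarrow> (real \<Rightarrow> nat) \<Rightarrow> bool" where
  "hypernat \<rho> N \<longleftrightarrow> rho_moderate \<rho> (\<lambda>\<epsilon>. real (N \<epsilon>))"

definition ni_choice :: "(real \<Rightarrow> real) \<Rightarrow> ((real \<Rightarrow> nat) \<Rightarrow> (real \<Rightarrow> nat)) \<Rightarrow> bool" where
  "ni_choice \<rho> ni \<longleftrightarrow>
     (\<forall>N. hypernat \<rho> N \<longrightarrow> rho_eq \<rho> (\<lambda>\<epsilon>. real (ni N \<epsilon>)) (\<lambda>\<epsilon>. real (N \<epsilon>))) \<and>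
     (\<forall>N M. hypernat \<rho> N \<longrightarrow> hypernat \<rho> M \<longrightarrow>
        rho_eq \<rho> (\<lambda>\<epsilon>. real (N \<epsilon>)) (\<lambda>\<epsilon>. real (M \<epsilon>)) \<longrightarrow> ni N = ni M)"

definition hyperlim :: "(real \<Rightarrow> real) \<Rightarrow> ((real \<Rightarrow> nat) \<Rightarrow> (real \<Rightarrow> complex)) \<Rightarrow> (real \<Rightarrow> complex) \<Rightarrow> bool" where
  "hyperlim \<rho> A l \<longleftrightarrow>
     (\<forall>q::nat. \<exists>M. hypernat \<rho> M \<and>
        (\<forall>n. hypernat \<rho> n \<longrightarrow> rt_le \<rho> (\<lambda>\<epsilon>. real (M \<epsilon>)) (\<lambda>\<epsilon>. real (n \<epsilon>)) \<longrightarrow>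
             rt_lt \<rho> (\<lambda>\<epsilon>. cmod (A n \<epsilon> - l \<epsilon>)) (\<lambda>\<epsilon>. \<rho> \<epsilon> ^ q)))"

definition hypersum :: "((real \<Rightarrow> nat) \<Rightarrow> (real \<Rightarrow> nat)) \<Rightarrow> (nat \<Rightarrow> real \<Rightarrow> complex) \<Rightarrow> (real \<Rightarrow> nat) \<Rightarrow> real \<Rightarrow> complex" where
  "hypersum ni a N = (\<lambda>\<epsilon>. \<Sum>n\<le>ni N \<epsilon>. a n \<epsilon>)"

definition moderate_over_hypersums :: "(real \<Rightarrow> real) \<Rightarrow> ((real \<Rightarrow> nat) \<Rightarrow> (real \<Rightarrow> nat)) \<Rightarrow> (nat \<Rightarrow> real \<Rightarrow> complex) \<Rightarrow> bool" where
  "moderate_over_hypersums \<rho> ni a \<longleftrightarrow> (\<forall>N. hypernat \<rho> N \<longrightarrow> rho_moderate \<rho> (hypersum ni a N))"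

text \<open>Equality in C_s of the classes of two nets moderate over hypersums.\<close>
definition hs_eq :: "(real \<Rightarrow> real) \<Rightarrow> ((real \<Rightarrow> nat) \<Rightarrow> (real \<Rightarrow> nat)) \<Rightarrow> (nat \<Rightarrow> real \<Rightarrow> complex) \<Rightarrow> (nat \<Rightarrow> real \<Rightarrow> complex) \<Rightarrow> bool" where
  "hs_eq \<rho> ni a b \<longleftrightarrow> (\<forall>N M. hypernat \<rho> N \<longrightarrow> hypernat \<rho> M \<longrightarrow>
       rho_negligible \<rho> (\<lambda>\<epsilon>. \<Sum>n\<in>{ni N \<epsilon>..ni M \<epsilon>}. a n \<epsilon> - b n \<epsilon>))"

definition weakly_moderate :: "(real \<Rightarrow> real) \<Rightarrow> (nat \<Rightarrow> real \<Rightarrow> complex) \<Rightarrow> bool" where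
  "weakly_moderate \<rho> a \<longleftrightarrow> (\<exists>Q R::nat. \<forall>\<^sub>F \<epsilon> in at_right 0. \<forall>n. cmod (a n \<epsilon>) \<le> inverse (\<rho> \<epsilon> ^ (n*Q + R)))"

definition strong_eq :: "(real \<Rightarrow> real) \<Rightarrow> (nat \<Rightarrow> real \<Rightarrow> complex) \<Rightarrow> (nat \<Rightarrow> real \<Rightarrow> complex) \<Rightarrow> bool" where
  "strong_eq \<rho> a b \<longleftrightarrow> (\<forall>q r::nat. \<forall>\<^sub>F \<epsilon> in at_right 0. \<forall>n. cmod (a n \<epsilon> - b n \<epsilon>) \<le> \<rho> \<epsilon> ^ (n*q + r))"

definition ereal_recip :: "ereal \<Rightarrow> ereal" where
  "ereal_recip L = (if L = 0 then \<infinity> else if L = \<infinity> then 0 else ereal (1 / real_of_ereal L))"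

definition rad :: "(nat \<Rightarrow> real \<Rightarrow> complex) \<Rightarrow> real \<Rightarrow> ereal" where
  "rad a = (\<lambda>\<epsilon>. ereal_recip (limsup (\<lambda>n. ereal (root n (cmod (a n \<epsilon>))))))"

definition cond_a :: "(real \<Rightarrow> real) \<Rightarrow> ((real \<Rightarrow> nat) \<Rightarrow> (real \<Rightarrow> nat)) \<Rightarrow> (nat \<Rightarrow> real \<Rightarrow> complex) \<Rightarrow> (real \<Rightarrow> complex) \<Rightarrow> (real \<Rightarrow> complex) \<Rightarrow> bool" where
  "cond_a \<rho> ni a z c \<longleftrightarrow> moderate_over_hypersums \<rho> ni (\<lambda>n \<epsilon>. a n \<epsilon> * (z \<epsilon> - c \<epsilon>) ^ n)"

definition cond_b :: "(real \<Rightarrow> real) \<Rightarrow> ((real \<Rightarrow> nat) \<Rightarrow> (real \<Rightarrow> nat)) \<Rightarrow> (nat \<Rightarrow> real \<Rightarrow> complex) \<Rightarrow> (real \<Rightarrow> complex) \<Rightarrow> (real \<Rightarrow> complex) \<Rightarrow> bool" where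
  "cond_b \<rho> ni a z c \<longleftrightarrow>
     (\<forall>\<^sub>F \<epsilon> in at_right 0. summable (\<lambda>n. a n \<epsilon> * (z \<epsilon> - c \<epsilon>) ^ n)) \<and>
     rho_moderate \<rho> (\<lambda>\<epsilon>. \<Sum>n. a n \<epsilon> * (z \<epsilon> - c \<epsilon>) ^ n) \<and>
     hyperlim \<rho> (hypersum ni (\<lambda>n \<epsilon>. a n \<epsilon> * (z \<epsilon> - c \<epsilon>) ^ n)) (\<lambda>\<epsilon>. \<Sum>n. a n \<epsilon> * (z \<epsilon> - c \<epsilon>) ^ n)"

definition cond_c :: "(real \<Rightarrow> real) \<Rightarrow> (nat \<Rightarrow> real \<Rightarrow> complex) \<Rightarrow> (real \<Rightarrow> complex) \<Rightarrow> (real \<Rightarrow> complex) \<Rightarrow> bool" where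
  "cond_c \<rho> a z c \<longleftrightarrow>
     (\<forall>zh. rho_eq \<rho> zh z \<longrightarrow>
        (\<forall>\<^sub>F \<epsilon> in at_right 0. summable (\<lambda>n. of_nat (Suc n) * a (Suc n) \<epsilon> * (zh \<epsilon> - c \<epsilon>) ^ n)) \<and>
        rho_moderate \<rho> (\<lambda>\<epsilon>. \<Sum>n. of_nat (Suc n) * a (Suc n) \<epsilon> * (zh \<epsilon> - c \<epsilon>) ^ n))"

definition conds_abc :: "(real \<Rightarrow> real) \<Rightarrow> ((real \<Rightarrow> nat) \<Rightarrow> (real \<Rightarrow> nat)) \<Rightarrow> (nat \<Rightarrow> real \<Rightarrow> complex) \<Rightarrow> (real \<Rightarrow> complex) \<Rightarrow> (real \<Rightarrow> complex) \<Rightarrow> bool" where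
  "conds_abc \<rho> ni a z c \<longleftrightarrow> cond_a \<rho> ni a z c \<and> cond_b \<rho> ni a z c \<and> cond_c \<rho> a z c"

text \<open>z in S((a_n)_c, c), expressed via representatives a, z, c of the classes.\<close>
definition in_conv_set :: "(real \<Rightarrow> real) \<Rightarrow> ((real \<Rightarrow> nat) \<Rightarrow> (real \<Rightarrow> nat)) \<Rightarrow> (nat \<Rightarrow> real \<Rightarrow> complex) \<Rightarrow> (real \<Rightarrow> complex) \<Rightarrow> (real \<Rightarrow> complex) \<Rightarrow> bool" where
  "in_conv_set \<rho> ni a z c \<longleftrightarrow>
     rt_lt_inf \<rho> (\<lambda>\<epsilon>. cmod (z \<epsilon> - c \<epsilon>)) (rad a) \<and>
     (\<exists>a' z' c'. weakly_moderate \<rho> a' \<and> strong_eq \<rho> a a' \<and>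
        rho_moderate \<rho> z' \<and> rho_eq \<rho> z z' \<and> rho_moderate \<rho> c' \<and> rho_eq \<rho> c c' \<and>
        conds_abc \<rho> ni a' z' c')"

end

theory Submission
  imports Defs
begin

text \<open>Changing representatives changes each term \<open>a\<^sub>n (z - c)\<^sup>n\<close> negligibly, and the point
  is to make this uniform in \<open>n\<close>. A hypersum has at most \<open>\<rho>\<^sup>-\<^sup>P\<close> terms; strong equivalence
  makes the change of coefficients \<open>\<rho>\<^sup>n\<^sup>q\<^sup>+\<^sup>r\<close>-small for every \<open>q\<close>, and the change of
  point is controlled by the moderateness of the partial hypersums (which bounds the terms)
  away from 0 and by weak moderateness near 0. So partial hypersums change negligibly, which
  gives (a) and the equality in \<open>C\<^sub>s\<close>. For the sums in (b), the change of coefficients is a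
  negligible geometric series, and the change of point is bounded by the mean value
  inequality with the derivative series, moderate by (c); strong equivalence also keeps
  \<open>|z - c|\<close> a margin below the radius of convergence. Applying this to the representatives
  witnessing \<open>z \<in> S((a\<^sub>n)\<^sub>c, c)\<close> yields all conditions for any other representatives.\<close>

section \<open>Elementary estimates\<close>

lemma norm_power_diff_le:
  fixes w v :: "'a::real_normed_field"
  shows "norm (w ^ n - v ^ n) \<le> real n * norm (w - v) * max (norm w) (norm v) ^ (n - 1)"
proof -
  let ?M = "max (norm w) (norm v)"
  have "norm (\<Sum>i<n. v ^ (n - Suc i) * w ^ i) \<le> (\<Sum>i<n. ?M ^ (n - 1))"
  proof (rule order_trans[OF norm_sum sum_mono])
    fix i assume "i \<in> {..<n}"
    then have "?M ^ (n - Suc i) * ?M ^ i = ?M ^ (n - 1)"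
      by (simp flip: power_add)
    moreover have "norm v ^ (n - Suc i) * norm w ^ i \<le> ?M ^ (n - Suc i) * ?M ^ i"
      by (intro mult_mono power_mono) (auto simp: le_max_iff_disj)
    ultimately show "norm (v ^ (n - Suc i) * w ^ i) \<le> ?M ^ (n - 1)"
      by (simp add: norm_mult norm_power)
  qed
  then have "norm (w - v) * norm (\<Sum>i<n. v ^ (n - Suc i) * w ^ i) \<le> norm (w - v) * (real n * ?M ^ (n - 1))"
    by (simp add: mult_left_mono)
  then show ?thesis
    by (simp add: power_diff_sumr2 norm_mult mult_ac)
qed

lemma max_norm_power_le_three_norm_power:
  fixes w v :: "'a::real_normed_vector"
  assumes w: "0 < norm w" and k: "real k * norm (w - v) \<le> norm w"
  shows "max (norm w) (norm v) ^ k \<le> 3 * norm w ^ k"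
proof -
  define x \<delta> where "x = norm w" and "\<delta> = norm (w - v)"
  have x: "0 < x" and \<delta>: "0 \<le> \<delta>"
    using w by (simp_all add: x_def \<delta>_def)
  have "max (norm w) (norm v) \<le> x + \<delta>"
    using norm_triangle_ineq2[of v w] norm_minus_commute[of w v] by (auto simp: x_def \<delta>_def)
  also have "\<dots> = x * (1 + \<delta> / x)"
    using x by (simp add: field_simps)
  finally have "max (norm w) (norm v) ^ k \<le> (x * (1 + \<delta> / x)) ^ k"
    by (rule power_mono) (simp add: le_max_iff_disj)
  also have "\<dots> = x ^ k * (1 + \<delta> / x) ^ k"
    by (rule power_mult_distrib)
  also have "(1 + \<delta> / x) ^ k \<le> exp (\<delta> / x) ^ k"
    using x \<delta> by (intro power_mono) auto
  also have "\<dots> = exp (real k * \<delta> / x)"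
    by (simp flip: exp_of_nat_mult)
  also have "\<dots> \<le> exp 1"
    using x k by (simp add: x_def \<delta>_def)
  also have "exp (1::real) \<le> 3"
    by (rule exp_le)
  finally show ?thesis
    using x by (simp add: x_def mult.commute)
qed

lemma coeff_power_diff_estimate_large_point:
  fixes w v a :: "'a::real_normed_field" and r :: real
  assumes r: "0 < r" "r \<le> 1/2" and n: "1 \<le> n" "real n \<le> inverse (r ^ P)"
    and aw: "norm (a * w ^ n) \<le> inverse (r ^ N)" and w: "r ^ s \<le> norm w"
    and d: "norm (w - v) \<le> r ^ (q + 2 * P + N + s + 2)"
  shows "norm a * (real n * norm (w - v) * max (norm w) (norm v) ^ (n - 1)) \<le> r ^ (q + P)"
proof -
  define \<delta> where "\<delta> = norm (w - v)"
  have w0: "0 < norm w"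
    using w r by (metis order_less_le_trans zero_less_power)
  have "\<delta> \<le> r ^ (s + P)"
    using r unfolding \<delta>_def by (intro order_trans[OF d power_decreasing]) auto
  then have "real (n - 1) * \<delta> \<le> inverse (r ^ P) * r ^ (s + P)"
    using n r by (intro mult_mono) (auto simp: \<delta>_def)
  also have "\<dots> = r ^ s"
    using r by (simp add: power_add)
  finally have M: "max (norm w) (norm v) ^ (n - 1) \<le> 3 * norm w ^ (n - 1)"
    using w by (intro max_norm_power_le_three_norm_power w0) (simp add: \<delta>_def)
  have "norm a * norm w ^ (n - 1) * norm w \<le> inverse (r ^ N)"
    using aw n by (simp add: norm_mult norm_power mult.assoc flip: power_Suc2)
  then have a_bound: "norm a * norm w ^ (n - 1) \<le> inverse (r ^ N) / r ^ s"
    using w w0 r order_trans[OF _ divide_left_mono[OF w]]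
    by (simp add: pos_le_divide_eq)
  have "norm a * (real n * \<delta> * max (norm w) (norm v) ^ (n - 1))
      \<le> 3 * real n * \<delta> * (norm a * norm w ^ (n - 1))"
    using mult_left_mono[OF M, of "norm a * real n * \<delta>"] by (simp add: \<delta>_def mult_ac)
  also have "\<dots> \<le> 3 * inverse (r ^ P) * r ^ (q + 2 * P + N + s + 2) * (inverse (r ^ N) / r ^ s)"
  proof (rule mult_mono[OF _ a_bound])
    show "3 * real n * \<delta> \<le> 3 * inverse (r ^ P) * r ^ (q + 2 * P + N + s + 2)"
      using n d r by (intro mult_mono) (auto simp: \<delta>_def)
  qed (use r in \<open>auto simp: \<delta>_def\<close>)
  also have "\<dots> = (3 * r\<^sup>2) * r ^ (q + P)"
  proof -
    have e: "q + 2 * P + N + s + 2 = P + N + s + (2 + (q + P))"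
      by simp
    have "r ^ (q + 2 * P + N + s + 2) = r ^ P * r ^ N * r ^ s * (r\<^sup>2 * r ^ (q + P))"
      unfolding e power_add by simp
    then show ?thesis
      using r by (simp add: field_simps)
  qed
  also have "\<dots> \<le> 1 * r ^ (q + P)"
  proof (rule mult_right_mono)
    have "r\<^sup>2 \<le> (1/2)\<^sup>2"
      using r by (intro power_mono) auto
    then show "3 * r\<^sup>2 \<le> 1"
      by (simp add: power_divide)
  qed (use r in simp)
  finally show ?thesis
    by (simp add: \<delta>_def)
qed

lemma coeff_mult_small_power_le:
  fixes a :: "'a::real_normed_field" and r x :: real
  assumes r: "0 < r" "r \<le> 1" and n: "1 \<le> n" and a: "norm a \<le> inverse (r ^ (n * Q + R))"
    and x: "0 \<le> x" "x \<le> r ^ (Q + 1)"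
  shows "norm a * x ^ (n - 1) \<le> inverse (r ^ (R + Q + 1))"
proof -
  obtain k where k: "n = Suc k"
    using n by (cases n) auto
  have "norm a * x ^ (n - 1) \<le> inverse (r ^ (n * Q + R)) * (r ^ (Q + 1)) ^ (n - 1)"
    using a x r by (intro mult_mono power_mono) auto
  also have "\<dots> = inverse (r ^ (R + Q + 1)) * r ^ n"
  proof -
    have "(r ^ (Q + 1)) ^ (n - 1) * r ^ (R + Q + 1) = r ^ (n * Q + R) * r ^ n"
      unfolding k by (simp flip: power_mult power_add add: algebra_simps)
    then show ?thesis
      using r by (simp add: field_simps)
  qed
  also have "\<dots> \<le> inverse (r ^ (R + Q + 1))"
    using r by (simp add: power_le_one)
  finally show ?thesis .
qed

lemma coeff_power_diff_estimate_small_point: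
  fixes w v a :: "'a::real_normed_field" and r :: real
  assumes r: "0 < r" "r \<le> 1/2" and n: "1 \<le> n" "real n \<le> inverse (r ^ P)"
    and a: "norm a \<le> inverse (r ^ (n * Q + R))" and w: "norm w < r ^ (Q + 2)"
    and d: "norm (w - v) \<le> r ^ (q + 2 * P + R + 2 * Q + 3)"
  shows "norm a * (real n * norm (w - v) * max (norm w) (norm v) ^ (n - 1)) \<le> r ^ (q + P)"
proof -
  define \<delta> where "\<delta> = norm (w - v)"
  have "\<delta> \<le> r ^ (Q + 2)"
    using r unfolding \<delta>_def by (intro order_trans[OF d power_decreasing]) auto
  then have "max (norm w) (norm v) \<le> 2 * r ^ (Q + 2)"
    using w norm_triangle_ineq2[of v w] norm_minus_commute[of w v] zero_less_power[OF r(1), of "Q + 2"]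
    by (auto simp: \<delta>_def simp del: power_Suc)
  also have "\<dots> \<le> r ^ (Q + 1)"
    using r by (simp add: field_simps)
  finally have M: "max (norm w) (norm v) \<le> r ^ (Q + 1)" .
  then have aM: "norm a * max (norm w) (norm v) ^ (n - 1) \<le> inverse (r ^ (R + Q + 1))"
    using r n a by (intro coeff_mult_small_power_le) (auto simp: le_max_iff_disj)
  have "norm a * (real n * \<delta> * max (norm w) (norm v) ^ (n - 1))
      = real n * \<delta> * (norm a * max (norm w) (norm v) ^ (n - 1))"
    by (simp only: mult_ac)
  also have "\<dots> \<le> inverse (r ^ P) * r ^ (q + 2 * P + R + 2 * Q + 3) * inverse (r ^ (R + Q + 1))"
    using n d aM r by (intro mult_mono) (auto simp: \<delta>_def le_max_iff_disj)
  also have "\<dots> = r ^ (Q + 2) * r ^ (q + P)"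
  proof -
    have e: "q + 2 * P + R + 2 * Q + 3 = P + (R + Q + 1) + ((Q + 2) + (q + P))"
      by simp
    show ?thesis
      unfolding e power_add using r by (simp add: field_simps)
  qed
  also have "\<dots> \<le> 1 * r ^ (q + P)"
    using r by (intro mult_right_mono power_le_one) auto
  finally show ?thesis
    by (simp add: \<delta>_def)
qed

text \<open>Far from 0 the change of the term is controlled by the bound on \<open>a * w ^ n\<close>,
  near 0 by the weak moderateness bound on \<open>a\<close>.\<close>
lemma norm_coeff_mult_power_diff_le:
  fixes w v a :: "'a::real_normed_field" and r :: real
  assumes r: "0 < r" "r \<le> 1/2" and n: "real n \<le> inverse (r ^ P)"
    and a: "norm a \<le> inverse (r ^ (n * Q + R))" and aw: "norm (a * w ^ n) \<le> inverse (r ^ N)"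
    and d: "norm (w - v) \<le> r ^ (q + 2 * P + N + R + 2 * Q + 6)"
  shows "norm (a * (w ^ n - v ^ n)) \<le> r ^ (q + P)"
proof (cases "n = 0")
  case True
  then show ?thesis
    using r by simp
next
  case False
  then have n1: "1 \<le> n"
    by simp
  have "norm (a * (w ^ n - v ^ n)) \<le> norm a * (real n * norm (w - v) * max (norm w) (norm v) ^ (n - 1))"
    unfolding norm_mult by (intro mult_left_mono norm_power_diff_le) simp
  also have "\<dots> \<le> r ^ (q + P)"
  proof (cases "r ^ (Q + 2) \<le> norm w")
    case True
    have "norm (w - v) \<le> r ^ (q + 2 * P + N + (Q + 2) + 2)"
      using r by (intro order_trans[OF d power_decreasing]) auto
    then show ?thesis
      by (intro coeff_power_diff_estimate_large_point[OF r n1 n aw True])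
  next
    case False
    have "norm (w - v) \<le> r ^ (q + 2 * P + R + 2 * Q + 3)"
      using r by (intro order_trans[OF d power_decreasing]) auto
    then show ?thesis
      using False by (intro coeff_power_diff_estimate_small_point[OF r n1 n a]) auto
  qed
  finally show ?thesis .
qed

lemma Suc_mult_power_le_one:
  fixes r :: real
  assumes "0 \<le> r" "r \<le> 1/2"
  shows "real (Suc n) * r ^ n \<le> 1"
proof -
  have "Suc n \<le> 2 ^ n"
    using less_exp[of n] by (cases n) auto
  then have "real (Suc n) \<le> 2 ^ n"
    by (metis of_nat_le_iff of_nat_numeral of_nat_power)
  then have "real (Suc n) * r ^ n \<le> 2 ^ n * r ^ n"
    using assms by (intro mult_right_mono) auto
  also have "\<dots> = (2 * r) ^ n"
    by (simp add: power_mult_distrib)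
  also have "\<dots> \<le> 1"
    using assms by (intro power_le_one) auto
  finally show ?thesis .
qed

lemma summable_geometric_majorant:
  fixes t :: "nat \<Rightarrow> 'a::banach"
  assumes "0 \<le> x" "x < 1" "\<And>n. norm (t n) \<le> C * x ^ n"
  shows "summable t"
  using assms by (intro summable_comparison_test[OF _ summable_mult[OF summable_geometric]]) auto

lemma norm_suminf_le_geometric_majorant:
  fixes t :: "nat \<Rightarrow> 'a::banach"
  assumes x: "0 \<le> x" "x \<le> 1/2" and t: "\<And>n. norm (t n) \<le> C * x ^ n"
  shows "norm (suminf t) \<le> 2 * C"
proof -
  have g: "summable (\<lambda>n. C * x ^ n)"
    using x by (intro summable_mult summable_geometric) auto
  have sn: "summable (\<lambda>n. norm (t n))"
    using t by (intro summable_comparison_test[OF _ g]) auto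
  have "0 \<le> C"
    using order_trans[OF norm_ge_zero t[of 0]] by simp
  have "norm (suminf t) \<le> (\<Sum>n. norm (t n))"
    by (rule summable_norm[OF sn])
  also have "\<dots> \<le> (\<Sum>n. C * x ^ n)"
    using t by (intro suminf_le sn g) auto
  also have "\<dots> = C / (1 - x)"
    using x by (simp add: suminf_mult suminf_geometric divide_simps)
  also have "\<dots> \<le> 2 * C"
    using x \<open>0 \<le> C\<close> by (simp add: field_simps mult_left_le)
  finally show ?thesis .
qed

lemma norm_sum_atLeastAtMost_le:
  fixes f :: "nat \<Rightarrow> 'a::real_normed_vector"
  shows "norm (\<Sum>n=a..b. f n) \<le> norm (\<Sum>n<Suc b. f n) + norm (\<Sum>n<a. f n)"
proof (cases "a \<le> b")
  case True
  then have "{..<Suc b} = {..<a} \<union> {a..b}"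
    by auto
  then have "(\<Sum>n<Suc b. f n) = (\<Sum>n<a. f n) + (\<Sum>n=a..b. f n)"
    by (metis sum.union_disjoint finite_lessThan finite_atLeastAtMost ivl_disj_int_one(4))
  then show ?thesis
    using norm_triangle_ineq4[of "\<Sum>n<Suc b. f n" "\<Sum>n<a. f n"] by (simp add: algebra_simps)
qed simp

lemma ex_argmax_lessThan:
  fixes f :: "nat \<Rightarrow> real"
  shows "\<exists>j\<le>K. \<forall>n<K. f n \<le> f j"
proof (cases "K = 0")
  case False
  have "Max (f ` {..<K}) \<in> f ` {..<K}"
    using False by (intro Max_in) auto
  then obtain j where "j < K" "f j = Max (f ` {..<K})"
    by auto
  then show ?thesis
    by (intro exI[of _ j]) auto
qed simp

lemma power_series_mean_value_bound:
  fixes c :: "nat \<Rightarrow> complex" and w v :: complex and K :: real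
  assumes R: "ereal K \<le> conv_radius c" and S: "\<And>y. y \<in> closed_segment w v \<Longrightarrow> norm y < K"
  obtains p where "p \<in> closed_segment w v"
    and "norm ((\<Sum>n. c n * v ^ n) - (\<Sum>n. c n * w ^ n)) \<le> norm (\<Sum>n. diffs c n * p ^ n) * norm (v - w)"
proof -
  define f g where "f y = (\<Sum>n. c n * y ^ n)" and "g y = (\<Sum>n. diffs c n * y ^ n)" for y
  have summable_c: "summable (\<lambda>n. c n * y ^ n)" if "norm y < K" for y
    using that by (intro summable_in_conv_radius order_less_le_trans[OF _ R]) simp
  then have summable_diffs: "summable (\<lambda>n. diffs c n * y ^ n)" if "norm y < K" for y
    using that by (blast intro: termdiff_converges)
  have f': "(f has_field_derivative g y) (at y)" if "norm y < K" for y
    unfolding f_def g_def using summable_c that by (rule termdiffs_strong')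
  have "isCont g y" if "norm y < K" for y
    unfolding g_def using summable_diffs that by (blast intro: DERIV_isCont termdiffs_strong')
  then have "continuous_on (closed_segment w v) (\<lambda>y. norm (g y))"
    using S by (intro continuous_at_imp_continuous_on ballI isCont_norm) auto
  then obtain p where p: "p \<in> closed_segment w v" and p_max: "\<forall>y\<in>closed_segment w v. norm (g y) \<le> norm (g p)"
    using continuous_attains_sup[OF compact_segment] by (metis ends_in_segment(1) empty_iff)
  have "norm (f v - f w) \<le> norm (g p) * norm (v - w)"
    using S p_max
    by (intro field_differentiable_bound[OF convex_closed_segment _ _ ends_in_segment(2,1)])
       (auto intro: has_field_derivative_at_within f')
  with p show ?thesis
    using that unfolding f_def g_def by blast
qed

lemma power_series_mean_value_points:
  fixes A :: "nat \<Rightarrow> real \<Rightarrow> complex" and W V :: "real \<Rightarrow> complex" and \<delta> :: "real \<Rightarrow> real"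
  obtains p where "\<And>\<epsilon>. p \<epsilon> \<in> closed_segment (W \<epsilon>) (V \<epsilon>)"
    and "\<And>\<epsilon>. ereal (norm (W \<epsilon>) + \<delta> \<epsilon>) \<le> conv_radius (\<lambda>n. A n \<epsilon>) \<Longrightarrow> norm (V \<epsilon> - W \<epsilon>) < \<delta> \<epsilon> \<Longrightarrow>
      norm ((\<Sum>n. A n \<epsilon> * V \<epsilon> ^ n) - (\<Sum>n. A n \<epsilon> * W \<epsilon> ^ n))
        \<le> norm (\<Sum>n. diffs (\<lambda>n. A n \<epsilon>) n * p \<epsilon> ^ n) * norm (V \<epsilon> - W \<epsilon>)"
proof -
  have "\<forall>\<epsilon>. \<exists>p. p \<in> closed_segment (W \<epsilon>) (V \<epsilon>) \<and>
      (ereal (norm (W \<epsilon>) + \<delta> \<epsilon>) \<le> conv_radius (\<lambda>n. A n \<epsilon>) \<and> norm (V \<epsilon> - W \<epsilon>) < \<delta> \<epsilon> \<longrightarrow>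
      norm ((\<Sum>n. A n \<epsilon> * V \<epsilon> ^ n) - (\<Sum>n. A n \<epsilon> * W \<epsilon> ^ n))
        \<le> norm (\<Sum>n. diffs (\<lambda>n. A n \<epsilon>) n * p ^ n) * norm (V \<epsilon> - W \<epsilon>))"
    (is "\<forall>\<epsilon>. ?ex \<epsilon>")
  proof
    fix \<epsilon>
    show "?ex \<epsilon>"
    proof (cases "ereal (norm (W \<epsilon>) + \<delta> \<epsilon>) \<le> conv_radius (\<lambda>n. A n \<epsilon>) \<and> norm (V \<epsilon> - W \<epsilon>) < \<delta> \<epsilon>")
      case True
      have "norm y < norm (W \<epsilon>) + \<delta> \<epsilon>" if "y \<in> closed_segment (W \<epsilon>) (V \<epsilon>)" for y
        using True segment_bound1[OF that] norm_triangle_ineq2[of y "W \<epsilon>"] by linarith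
      with True obtain p where "p \<in> closed_segment (W \<epsilon>) (V \<epsilon>)"
        "norm ((\<Sum>n. A n \<epsilon> * V \<epsilon> ^ n) - (\<Sum>n. A n \<epsilon> * W \<epsilon> ^ n))
          \<le> norm (\<Sum>n. diffs (\<lambda>n. A n \<epsilon>) n * p ^ n) * norm (V \<epsilon> - W \<epsilon>)"
        by (elim conjE power_series_mean_value_bound)
      then show ?thesis
        by blast
    qed auto
  qed
  then obtain p where "\<forall>\<epsilon>. p \<epsilon> \<in> closed_segment (W \<epsilon>) (V \<epsilon>) \<and>
      (ereal (norm (W \<epsilon>) + \<delta> \<epsilon>) \<le> conv_radius (\<lambda>n. A n \<epsilon>) \<and> norm (V \<epsilon> - W \<epsilon>) < \<delta> \<epsilon> \<longrightarrow>
      norm ((\<Sum>n. A n \<epsilon> * V \<epsilon> ^ n) - (\<Sum>n. A n \<epsilon> * W \<epsilon> ^ n))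
        \<le> norm (\<Sum>n. diffs (\<lambda>n. A n \<epsilon>) n * p \<epsilon> ^ n) * norm (V \<epsilon> - W \<epsilon>))"
    by (rule choice[THEN exE])
  then show ?thesis
    using that by blast
qed

lemma rad_eq_conv_radius: "rad a = (\<lambda>\<epsilon>. conv_radius (\<lambda>n. a n \<epsilon>))"
proof
  fix \<epsilon>
  define L where "L = limsup (\<lambda>n. ereal (root n (cmod (a n \<epsilon>))))"
  have "0 = limsup (\<lambda>n. (0::ereal))"
    by (simp add: Limsup_const)
  also have "\<dots> \<le> L"
    unfolding L_def by (intro Limsup_mono) (simp add: real_root_ge_zero)
  finally have "ereal_recip L = inverse L"
    by (cases L) (auto simp: ereal_recip_def inverse_eq_divide)
  then show "rad a \<epsilon> = conv_radius (\<lambda>n. a n \<epsilon>)"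
    by (simp add: rad_def conv_radius_def L_def)
qed

section \<open>Moderate and negligible nets\<close>

lemma rho_negligible_mono:
  assumes "rho_negligible \<rho> x" "\<forall>\<^sub>F \<epsilon> in at_right 0. norm (y \<epsilon>) \<le> norm (x \<epsilon>)"
  shows "rho_negligible \<rho> y"
  unfolding rho_negligible_def
proof
  fix q
  show "\<forall>\<^sub>F \<epsilon> in at_right 0. norm (y \<epsilon>) \<le> \<rho> \<epsilon> ^ q"
    using assms(2) assms(1)[unfolded rho_negligible_def, rule_format, of q]
    by eventually_elim auto
qed

lemma rho_negligible_minus: "rho_negligible \<rho> x \<Longrightarrow> rho_negligible \<rho> (\<lambda>\<epsilon>. - x \<epsilon>)"
  by (simp add: rho_negligible_def)

lemma rho_negligible_norm: "rho_negligible \<rho> x \<Longrightarrow> rho_negligible \<rho> (\<lambda>\<epsilon>. norm (x \<epsilon>))"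
  by (simp add: rho_negligible_def)

lemma rho_negligible_imp_moderate:
  assumes "rho_negligible \<rho> x"
  shows "rho_moderate \<rho> x"
  using assms[unfolded rho_negligible_def, THEN spec, of 0] unfolding rho_moderate_def
  by (intro exI[of _ 0]) simp

lemma rho_moderate_mono:
  assumes "rho_moderate \<rho> x" "\<forall>\<^sub>F \<epsilon> in at_right 0. norm (y \<epsilon>) \<le> norm (x \<epsilon>)"
  shows "rho_moderate \<rho> y"
proof -
  obtain N where "\<forall>\<^sub>F \<epsilon> in at_right 0. norm (x \<epsilon>) \<le> inverse (\<rho> \<epsilon> ^ N)"
    using assms(1) by (auto simp: rho_moderate_def)
  with assms(2) have "\<forall>\<^sub>F \<epsilon> in at_right 0. norm (y \<epsilon>) \<le> inverse (\<rho> \<epsilon> ^ N)"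
    by eventually_elim auto
  then show ?thesis
    by (auto simp: rho_moderate_def)
qed

lemma rho_moderate_eventually_eq:
  assumes "rho_moderate \<rho> x" "\<forall>\<^sub>F \<epsilon> in at_right 0. y \<epsilon> = x \<epsilon>"
  shows "rho_moderate \<rho> y"
  using assms(2) by (intro rho_moderate_mono[OF assms(1)]) (auto elim: eventually_mono)

lemma rho_negligible_eventually_eq:
  assumes "rho_negligible \<rho> x" "\<forall>\<^sub>F \<epsilon> in at_right 0. y \<epsilon> = x \<epsilon>"
  shows "rho_negligible \<rho> y"
  using assms(2) by (intro rho_negligible_mono[OF assms(1)]) (auto elim: eventually_mono)

lemma rho_moderate_minus: "rho_moderate \<rho> x \<Longrightarrow> rho_moderate \<rho> (\<lambda>\<epsilon>. - x \<epsilon>)"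
  by (simp add: rho_moderate_def)

lemma rho_moderate_norm: "rho_moderate \<rho> x \<Longrightarrow> rho_moderate \<rho> (\<lambda>\<epsilon>. norm (x \<epsilon>))"
  by (simp add: rho_moderate_def)

lemma rho_eq_sym: "rho_eq \<rho> x y \<Longrightarrow> rho_eq \<rho> y x"
  unfolding rho_eq_def rho_negligible_def by (simp add: norm_minus_commute)

lemma rho_eq_norm:
  assumes "rho_eq \<rho> x y"
  shows "rho_eq \<rho> (\<lambda>\<epsilon>. norm (x \<epsilon>)) (\<lambda>\<epsilon>. norm (y \<epsilon>))"
  using assms unfolding rho_eq_def
  by (rule rho_negligible_mono) (simp add: norm_triangle_ineq3)

lemma strong_eq_sym: "strong_eq \<rho> A B \<Longrightarrow> strong_eq \<rho> B A"
  unfolding strong_eq_def by (simp add: norm_minus_commute)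

lemma hs_eq_sym: "hs_eq \<rho> ni a b \<Longrightarrow> hs_eq \<rho> ni b a"
  unfolding hs_eq_def rho_negligible_def by (simp add: sum_subtractf norm_minus_commute)

context
  fixes \<rho> :: "real \<Rightarrow> real"
  assumes gauge: "rho_gauge \<rho>"
begin

lemma eventually_rho_pos_le_half: "\<forall>\<^sub>F \<epsilon> in at_right 0. 0 < \<rho> \<epsilon> \<and> \<rho> \<epsilon> \<le> 1/2"
proof -
  have "\<forall>\<^sub>F \<epsilon> in at_right 0. \<rho> \<epsilon> < 1/2"
    using gauge order_tendstoD(2)[of \<rho> 0 "at_right 0" "1/2"] by (simp add: rho_gauge_def)
  moreover have "\<forall>\<^sub>F \<epsilon> in at_right (0::real). \<epsilon> \<in> {0<..1}"
    by (simp add: eventually_at_right_field) (metis zero_less_one less_eq_real_def)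
  ultimately show ?thesis
    by eventually_elim (use gauge in \<open>auto simp: rho_gauge_def\<close>)
qed

lemma two_rho_power_Suc_le:
  "\<forall>\<^sub>F \<epsilon> in at_right 0. 2 * \<rho> \<epsilon> ^ Suc q \<le> \<rho> \<epsilon> ^ q"
  using eventually_rho_pos_le_half
  by eventually_elim (simp add: mult.assoc[symmetric] mult_right_le_one_le)

lemma rho_negligible_add:
  fixes x y :: "real \<Rightarrow> 'a::real_normed_vector"
  assumes "rho_negligible \<rho> x" "rho_negligible \<rho> y"
  shows "rho_negligible \<rho> (\<lambda>\<epsilon>. x \<epsilon> + y \<epsilon>)"
  unfolding rho_negligible_def
proof
  fix q
  show "\<forall>\<^sub>F \<epsilon> in at_right 0. norm (x \<epsilon> + y \<epsilon>) \<le> \<rho> \<epsilon> ^ q"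
    using assms[unfolded rho_negligible_def, THEN spec, of "Suc q"] two_rho_power_Suc_le[of q]
  proof eventually_elim
    case (elim \<epsilon>)
    then show ?case
      using norm_triangle_ineq[of "x \<epsilon>" "y \<epsilon>"] by linarith
  qed
qed

lemma rho_negligible_diff:
  fixes x y :: "real \<Rightarrow> 'a::real_normed_vector"
  assumes "rho_negligible \<rho> x" "rho_negligible \<rho> y"
  shows "rho_negligible \<rho> (\<lambda>\<epsilon>. x \<epsilon> - y \<epsilon>)"
  using rho_negligible_add[OF assms(1) rho_negligible_minus[OF assms(2)]] by simp

lemma rho_moderate_add:
  fixes x y :: "real \<Rightarrow> 'a::real_normed_vector"
  assumes "rho_moderate \<rho> x" "rho_moderate \<rho> y"
  shows "rho_moderate \<rho> (\<lambda>\<epsilon>. x \<epsilon> + y \<epsilon>)"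
proof -
  obtain N M where
    N: "\<forall>\<^sub>F \<epsilon> in at_right 0. norm (x \<epsilon>) \<le> inverse (\<rho> \<epsilon> ^ N)" and
    M: "\<forall>\<^sub>F \<epsilon> in at_right 0. norm (y \<epsilon>) \<le> inverse (\<rho> \<epsilon> ^ M)"
    using assms by (auto simp: rho_moderate_def)
  have "\<forall>\<^sub>F \<epsilon> in at_right 0. norm (x \<epsilon> + y \<epsilon>) \<le> inverse (\<rho> \<epsilon> ^ (N + M + 1))"
    using N M eventually_rho_pos_le_half
  proof eventually_elim
    case (elim \<epsilon>)
    define r where "r = \<rho> \<epsilon>"
    have r: "0 < r" "r \<le> 1/2"
      using elim by (auto simp: r_def)
    have "inverse (r ^ N) \<le> inverse (r ^ (N + M))" "inverse (r ^ M) \<le> inverse (r ^ (N + M))"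
      using r by (auto intro!: le_imp_inverse_le power_decreasing)
    moreover have "2 * inverse (r ^ (N + M)) \<le> inverse (r ^ (N + M + 1))"
      using r by (simp add: field_simps)
    ultimately show ?case
      using elim norm_triangle_ineq[of "x \<epsilon>" "y \<epsilon>"] unfolding r_def by linarith
  qed
  then show ?thesis
    unfolding rho_moderate_def by blast
qed

lemma rho_moderate_diff:
  fixes x y :: "real \<Rightarrow> 'a::real_normed_vector"
  assumes "rho_moderate \<rho> x" "rho_moderate \<rho> y"
  shows "rho_moderate \<rho> (\<lambda>\<epsilon>. x \<epsilon> - y \<epsilon>)"
  using rho_moderate_add[OF assms(1) rho_moderate_minus[OF assms(2)]] by simp

lemma rho_moderate_rho_eq: "rho_moderate \<rho> x \<Longrightarrow> rho_eq \<rho> y x \<Longrightarrow> rho_moderate \<rho> y"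
  unfolding rho_eq_def
  using rho_moderate_add[of x "\<lambda>\<epsilon>. y \<epsilon> - x \<epsilon>"] rho_negligible_imp_moderate by auto

lemma rho_negligible_mult_moderate:
  fixes x y :: "real \<Rightarrow> 'a::real_normed_algebra"
  assumes "rho_moderate \<rho> x" "rho_negligible \<rho> y"
  shows "rho_negligible \<rho> (\<lambda>\<epsilon>. x \<epsilon> * y \<epsilon>)"
  unfolding rho_negligible_def
proof
  fix q
  obtain N where "\<forall>\<^sub>F \<epsilon> in at_right 0. norm (x \<epsilon>) \<le> inverse (\<rho> \<epsilon> ^ N)"
    using assms(1) by (auto simp: rho_moderate_def)
  with assms(2)[unfolded rho_negligible_def, THEN spec, of "q + N"] eventually_rho_pos_le_half
  show "\<forall>\<^sub>F \<epsilon> in at_right 0. norm (x \<epsilon> * y \<epsilon>) \<le> \<rho> \<epsilon> ^ q"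
  proof eventually_elim
    case (elim \<epsilon>)
    have "norm (x \<epsilon> * y \<epsilon>) \<le> inverse (\<rho> \<epsilon> ^ N) * \<rho> \<epsilon> ^ (q + N)"
      using elim by (intro order_trans[OF norm_mult_ineq] mult_mono) auto
    also have "\<dots> = \<rho> \<epsilon> ^ q"
      using elim by (simp add: power_add)
    finally show ?case .
  qed
qed

lemma rho_eq_trans: "rho_eq \<rho> x y \<Longrightarrow> rho_eq \<rho> y z \<Longrightarrow> rho_eq \<rho> x z"
  unfolding rho_eq_def using rho_negligible_add[of "\<lambda>\<epsilon>. x \<epsilon> - y \<epsilon>" "\<lambda>\<epsilon>. y \<epsilon> - z \<epsilon>"] by simp

lemma rho_eq_diff:
  fixes x y u v :: "real \<Rightarrow> 'a::real_normed_vector"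
  assumes "rho_eq \<rho> x y" "rho_eq \<rho> u v"
  shows "rho_eq \<rho> (\<lambda>\<epsilon>. x \<epsilon> - u \<epsilon>) (\<lambda>\<epsilon>. y \<epsilon> - v \<epsilon>)"
  using rho_negligible_diff[OF assms[unfolded rho_eq_def]] by (simp add: rho_eq_def algebra_simps)

lemma strong_eq_trans:
  assumes "strong_eq \<rho> A B" "strong_eq \<rho> B C"
  shows "strong_eq \<rho> A C"
  unfolding strong_eq_def
proof (intro allI)
  fix q r
  show "\<forall>\<^sub>F \<epsilon> in at_right 0. \<forall>n. cmod (A n \<epsilon> - C n \<epsilon>) \<le> \<rho> \<epsilon> ^ (n * q + r)"
    using assms[unfolded strong_eq_def, THEN spec, THEN spec, of q "Suc r"] eventually_rho_pos_le_half
  proof eventually_elim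
    case (elim \<epsilon>)
    show ?case
    proof
      fix n
      have "2 * \<rho> \<epsilon> ^ Suc (n * q + r) \<le> \<rho> \<epsilon> ^ (n * q + r)"
        using elim(3) by (simp add: mult.assoc[symmetric] mult_right_le_one_le)
      then show "cmod (A n \<epsilon> - C n \<epsilon>) \<le> \<rho> \<epsilon> ^ (n * q + r)"
        using elim(1,2)[rule_format, of n] norm_triangle_ineq[of "A n \<epsilon> - B n \<epsilon>" "B n \<epsilon> - C n \<epsilon>"]
        by simp
    qed
  qed
qed

lemma hs_eq_trans:
  assumes "hs_eq \<rho> ni a b" "hs_eq \<rho> ni b c"
  shows "hs_eq \<rho> ni a c"
  unfolding hs_eq_def
proof (intro allI impI)
  fix N M
  assume "hypernat \<rho> N" "hypernat \<rho> M"
  then have "rho_negligible \<rho> (\<lambda>\<epsilon>. (\<Sum>n\<in>{ni N \<epsilon>..ni M \<epsilon>}. a n \<epsilon> - b n \<epsilon>) + (\<Sum>n\<in>{ni N \<epsilon>..ni M \<epsilon>}. b n \<epsilon> - c n \<epsilon>))"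
    using assms by (intro rho_negligible_add) (auto simp: hs_eq_def)
  then show "rho_negligible \<rho> (\<lambda>\<epsilon>. \<Sum>n\<in>{ni N \<epsilon>..ni M \<epsilon>}. a n \<epsilon> - c n \<epsilon>)"
    by (simp flip: sum.distrib)
qed

lemma rho_eq_nat_eventually_eq:
  assumes "rho_eq \<rho> (\<lambda>\<epsilon>. real (K \<epsilon>)) (\<lambda>\<epsilon>. real (L \<epsilon>))"
  shows "\<forall>\<^sub>F \<epsilon> in at_right 0. K \<epsilon> = L \<epsilon>"
proof -
  have "\<forall>\<^sub>F \<epsilon> in at_right 0. \<bar>real (K \<epsilon>) - real (L \<epsilon>)\<bar> \<le> \<rho> \<epsilon>"
    using assms[unfolded rho_eq_def rho_negligible_def, THEN spec, of 1] by simp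
  with eventually_rho_pos_le_half show ?thesis
    by eventually_elim linarith
qed

lemma hypernat_ni:
  assumes "ni_choice \<rho> ni" "hypernat \<rho> N"
  shows "hypernat \<rho> (ni N)" "\<forall>\<^sub>F \<epsilon> in at_right 0. ni N \<epsilon> = N \<epsilon>"
proof -
  have eq: "rho_eq \<rho> (\<lambda>\<epsilon>. real (ni N \<epsilon>)) (\<lambda>\<epsilon>. real (N \<epsilon>))"
    using assms unfolding ni_choice_def by blast
  then show "hypernat \<rho> (ni N)"
    using rho_moderate_rho_eq assms(2) by (simp add: hypernat_def)
  show "\<forall>\<^sub>F \<epsilon> in at_right 0. ni N \<epsilon> = N \<epsilon>"
    by (rule rho_eq_nat_eventually_eq[OF eq])
qed

lemma hypernat_mono: "hypernat \<rho> N \<Longrightarrow> (\<And>\<epsilon>. K \<epsilon> \<le> N \<epsilon>) \<Longrightarrow> hypernat \<rho> K"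
  unfolding hypernat_def by (erule rho_moderate_mono) auto

lemma hypernat_Suc:
  assumes "hypernat \<rho> N"
  shows "hypernat \<rho> (\<lambda>\<epsilon>. Suc (N \<epsilon>))"
proof -
  have "rho_moderate \<rho> (\<lambda>\<epsilon>. 1::real)"
    unfolding rho_moderate_def by (rule exI[of _ 0]) simp
  from rho_moderate_add[OF assms[unfolded hypernat_def] this] show ?thesis
    by (simp add: hypernat_def add.commute)
qed

lemma eventually_less_of_rt_lt_inf:
  assumes "rt_lt_inf \<rho> x y"
  shows "\<forall>\<^sub>F \<epsilon> in at_right 0. ereal (x \<epsilon>) < y \<epsilon>"
proof -
  obtain m where "\<forall>\<^sub>F \<epsilon> in at_right 0. y \<epsilon> > ereal (x \<epsilon> + \<rho> \<epsilon> ^ m)"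
    using assms by (auto simp: rt_lt_inf_def)
  with eventually_rho_pos_le_half show ?thesis
  proof eventually_elim
    case (elim \<epsilon>)
    then have "ereal (x \<epsilon>) \<le> ereal (x \<epsilon> + \<rho> \<epsilon> ^ m)"
      by simp
    then show ?case
      using elim(2) by (rule order.strict_trans1)
  qed
qed

lemma rt_lt_inf_norm_rho_eq:
  fixes W W' :: "real \<Rightarrow> 'a::real_normed_vector"
  assumes "rho_eq \<rho> W' W" "rt_lt_inf \<rho> (\<lambda>\<epsilon>. norm (W \<epsilon>)) R"
  shows "rt_lt_inf \<rho> (\<lambda>\<epsilon>. norm (W' \<epsilon>)) R"
proof -
  obtain m where m: "\<forall>\<^sub>F \<epsilon> in at_right 0. R \<epsilon> > ereal (norm (W \<epsilon>) + \<rho> \<epsilon> ^ m)"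
    using assms(2) by (auto simp: rt_lt_inf_def)
  have "\<forall>\<^sub>F \<epsilon> in at_right 0. norm (W' \<epsilon> - W \<epsilon>) \<le> \<rho> \<epsilon> ^ Suc m"
    using assms(1) unfolding rho_eq_def rho_negligible_def by blast
  with m two_rho_power_Suc_le[of m]
  have "\<forall>\<^sub>F \<epsilon> in at_right 0. R \<epsilon> > ereal (norm (W' \<epsilon>) + \<rho> \<epsilon> ^ Suc m)"
  proof eventually_elim
    case (elim \<epsilon>)
    have "norm (W' \<epsilon>) + \<rho> \<epsilon> ^ Suc m \<le> norm (W \<epsilon>) + \<rho> \<epsilon> ^ m"
      using elim(2,3) norm_triangle_ineq2[of "W' \<epsilon>" "W \<epsilon>"] by linarith
    then show ?case
      by (intro order.strict_trans1[OF _ elim(1)]) simp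
  qed
  then show ?thesis
    unfolding rt_lt_inf_def by blast
qed

lemma moderate_partial_sum_atMost:
  assumes "ni_choice \<rho> ni" "moderate_over_hypersums \<rho> ni t" "hypernat \<rho> j"
  shows "rho_moderate \<rho> (\<lambda>\<epsilon>. \<Sum>n\<le>j \<epsilon>. t n \<epsilon>)"
proof -
  have "rho_moderate \<rho> (hypersum ni t j)"
    using assms by (auto simp: moderate_over_hypersums_def)
  moreover have "\<forall>\<^sub>F \<epsilon> in at_right 0. norm (\<Sum>n\<le>j \<epsilon>. t n \<epsilon>) \<le> norm (hypersum ni t j \<epsilon>)"
    using hypernat_ni(2)[OF assms(1,3)] by eventually_elim (simp add: hypersum_def)
  ultimately show ?thesis
    by (rule rho_moderate_mono)
qed

lemma moderate_partial_sum_lessThan: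
  assumes "ni_choice \<rho> ni" "moderate_over_hypersums \<rho> ni t" "hypernat \<rho> j"
  shows "rho_moderate \<rho> (\<lambda>\<epsilon>. \<Sum>n<j \<epsilon>. t n \<epsilon>)"
proof -
  have "hypernat \<rho> (\<lambda>\<epsilon>. j \<epsilon> - 1)"
    using assms(3) by (rule hypernat_mono) auto
  then have "rho_moderate \<rho> (\<lambda>\<epsilon>. \<Sum>n\<le>j \<epsilon> - 1. t n \<epsilon>)"
    by (rule moderate_partial_sum_atMost[OF assms(1,2)])
  moreover have "norm (\<Sum>n<j \<epsilon>. t n \<epsilon>) \<le> norm (\<Sum>n\<le>j \<epsilon> - 1. t n \<epsilon>)" for \<epsilon>
    by (cases "j \<epsilon>") (simp_all add: lessThan_Suc_atMost)
  then have "\<forall>\<^sub>F \<epsilon> in at_right 0. norm (\<Sum>n<j \<epsilon>. t n \<epsilon>) \<le> norm (\<Sum>n\<le>j \<epsilon> - 1. t n \<epsilon>)"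
    by (simp add: always_eventually)
  ultimately show ?thesis
    by (rule rho_moderate_mono)
qed

text \<open>The largest term below \<open>K\<close> is the difference of two partial hypersums.\<close>
lemma moderate_over_hypersums_term_bound:
  assumes ni: "ni_choice \<rho> ni" and t: "moderate_over_hypersums \<rho> ni t" and K: "hypernat \<rho> K"
  obtains N where "\<forall>\<^sub>F \<epsilon> in at_right 0. \<forall>n<K \<epsilon>. norm (t n \<epsilon>) \<le> inverse (\<rho> \<epsilon> ^ N)"
proof -
  have "\<forall>\<epsilon>. \<exists>j\<le>K \<epsilon>. \<forall>n<K \<epsilon>. norm (t n \<epsilon>) \<le> norm (t j \<epsilon>)"
    by (intro allI ex_argmax_lessThan)
  then obtain j where j_max: "\<forall>\<epsilon>. j \<epsilon> \<le> K \<epsilon> \<and> (\<forall>n<K \<epsilon>. norm (t n \<epsilon>) \<le> norm (t (j \<epsilon>) \<epsilon>))"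
    by (rule choice[THEN exE])
  have j: "hypernat \<rho> j"
    using K by (rule hypernat_mono) (use j_max in blast)
  have "rho_moderate \<rho> (\<lambda>\<epsilon>. (\<Sum>n<Suc (j \<epsilon>). t n \<epsilon>) - (\<Sum>n<j \<epsilon>. t n \<epsilon>))"
    by (intro rho_moderate_diff moderate_partial_sum_lessThan[OF ni t] hypernat_Suc j)
  then obtain N where "\<forall>\<^sub>F \<epsilon> in at_right 0. norm (t (j \<epsilon>) \<epsilon>) \<le> inverse (\<rho> \<epsilon> ^ N)"
    by (auto simp: rho_moderate_def)
  then have "\<forall>\<^sub>F \<epsilon> in at_right 0. \<forall>n<K \<epsilon>. norm (t n \<epsilon>) \<le> inverse (\<rho> \<epsilon> ^ N)"
  proof eventually_elim
    case (elim \<epsilon>)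
    show ?case
    proof (intro allI impI)
      fix n
      assume "n < K \<epsilon>"
      then have "norm (t n \<epsilon>) \<le> norm (t (j \<epsilon>) \<epsilon>)"
        using j_max by blast
      then show "norm (t n \<epsilon>) \<le> inverse (\<rho> \<epsilon> ^ N)"
        using elim by linarith
    qed
  qed
  then show ?thesis
    by (rule that)
qed

lemma strong_eq_mult_power_le:
  fixes A B :: "nat \<Rightarrow> real \<Rightarrow> complex" and u :: "real \<Rightarrow> real"
  assumes "strong_eq \<rho> A B" "rho_moderate \<rho> u"
  shows "\<forall>\<^sub>F \<epsilon> in at_right 0. \<forall>n. cmod (A n \<epsilon> - B n \<epsilon>) * \<bar>u \<epsilon>\<bar> ^ n \<le> \<rho> \<epsilon> ^ (n * q + r)"
proof -
  obtain N where N: "\<forall>\<^sub>F \<epsilon> in at_right 0. \<bar>u \<epsilon>\<bar> \<le> inverse (\<rho> \<epsilon> ^ N)"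
    using assms(2) by (auto simp: rho_moderate_def)
  have "\<forall>\<^sub>F \<epsilon> in at_right 0. \<forall>n. cmod (A n \<epsilon> - B n \<epsilon>) \<le> \<rho> \<epsilon> ^ (n * (q + N) + r)"
    using assms(1) by (auto simp: strong_eq_def)
  with N eventually_rho_pos_le_half show ?thesis
  proof eventually_elim
    case (elim \<epsilon>)
    show ?case
    proof
      fix n
      have "cmod (A n \<epsilon> - B n \<epsilon>) * \<bar>u \<epsilon>\<bar> ^ n \<le> \<rho> \<epsilon> ^ (n * (q + N) + r) * inverse (\<rho> \<epsilon> ^ N) ^ n"
        using elim by (intro mult_mono power_mono) auto
      also have "\<dots> = \<rho> \<epsilon> ^ (n * q + r)"
        using elim by (simp add: power_add power_mult field_simps algebra_simps power_mult_distrib[symmetric] power_inverse flip: power_mult)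
      finally show "cmod (A n \<epsilon> - B n \<epsilon>) * \<bar>u \<epsilon>\<bar> ^ n \<le> \<rho> \<epsilon> ^ (n * q + r)" .
    qed
  qed
qed

lemma negligible_partial_sum_point_change:
  fixes A :: "nat \<Rightarrow> real \<Rightarrow> complex" and W V :: "real \<Rightarrow> complex"
  assumes ni: "ni_choice \<rho> ni" and t: "moderate_over_hypersums \<rho> ni (\<lambda>n \<epsilon>. A n \<epsilon> * W \<epsilon> ^ n)"
    and A: "weakly_moderate \<rho> A" and eq: "rho_eq \<rho> W V" and K: "hypernat \<rho> K"
  shows "rho_negligible \<rho> (\<lambda>\<epsilon>. \<Sum>n<K \<epsilon>. A n \<epsilon> * (W \<epsilon> ^ n - V \<epsilon> ^ n))"
  unfolding rho_negligible_def
proof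
  fix q
  obtain N where N: "\<forall>\<^sub>F \<epsilon> in at_right 0. \<forall>n<K \<epsilon>. norm (A n \<epsilon> * W \<epsilon> ^ n) \<le> inverse (\<rho> \<epsilon> ^ N)"
    using moderate_over_hypersums_term_bound[OF ni t K] .
  obtain Q R where QR: "\<forall>\<^sub>F \<epsilon> in at_right 0. \<forall>n. cmod (A n \<epsilon>) \<le> inverse (\<rho> \<epsilon> ^ (n * Q + R))"
    using A by (auto simp: weakly_moderate_def)
  obtain P where P: "\<forall>\<^sub>F \<epsilon> in at_right 0. real (K \<epsilon>) \<le> inverse (\<rho> \<epsilon> ^ P)"
    using K by (auto simp: hypernat_def rho_moderate_def)
  have "\<forall>\<^sub>F \<epsilon> in at_right 0. norm (W \<epsilon> - V \<epsilon>) \<le> \<rho> \<epsilon> ^ (q + 2 * P + N + R + 2 * Q + 6)"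
    using eq by (auto simp: rho_eq_def rho_negligible_def)
  with N QR P eventually_rho_pos_le_half
  show "\<forall>\<^sub>F \<epsilon> in at_right 0. norm (\<Sum>n<K \<epsilon>. A n \<epsilon> * (W \<epsilon> ^ n - V \<epsilon> ^ n)) \<le> \<rho> \<epsilon> ^ q"
  proof eventually_elim
    case (elim \<epsilon>)
    have "norm (\<Sum>n<K \<epsilon>. A n \<epsilon> * (W \<epsilon> ^ n - V \<epsilon> ^ n)) \<le> (\<Sum>n<K \<epsilon>. \<rho> \<epsilon> ^ (q + P))"
    proof (rule order_trans[OF norm_sum sum_mono])
      fix n
      assume "n \<in> {..<K \<epsilon>}"
      then show "norm (A n \<epsilon> * (W \<epsilon> ^ n - V \<epsilon> ^ n)) \<le> \<rho> \<epsilon> ^ (q + P)"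
        using elim by (intro norm_coeff_mult_power_diff_le[where Q = Q and N = N]) auto
    qed
    also have "\<dots> \<le> inverse (\<rho> \<epsilon> ^ P) * \<rho> \<epsilon> ^ (q + P)"
      using elim by (simp add: mult_right_mono)
    also have "\<dots> = \<rho> \<epsilon> ^ q"
      using elim by (simp add: power_add)
    finally show ?case .
  qed
qed

lemma negligible_partial_sum_coeff_change:
  fixes A B :: "nat \<Rightarrow> real \<Rightarrow> complex" and V :: "real \<Rightarrow> complex"
  assumes AB: "strong_eq \<rho> A B" and V: "rho_moderate \<rho> V" and K: "hypernat \<rho> K"
  shows "rho_negligible \<rho> (\<lambda>\<epsilon>. \<Sum>n<K \<epsilon>. (A n \<epsilon> - B n \<epsilon>) * V \<epsilon> ^ n)"
  unfolding rho_negligible_def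
proof
  fix q
  obtain P where P: "\<forall>\<^sub>F \<epsilon> in at_right 0. real (K \<epsilon>) \<le> inverse (\<rho> \<epsilon> ^ P)"
    using K by (auto simp: hypernat_def rho_moderate_def)
  from strong_eq_mult_power_le[OF AB rho_moderate_norm[OF V], of 0 "q + P"] P eventually_rho_pos_le_half
  show "\<forall>\<^sub>F \<epsilon> in at_right 0. norm (\<Sum>n<K \<epsilon>. (A n \<epsilon> - B n \<epsilon>) * V \<epsilon> ^ n) \<le> \<rho> \<epsilon> ^ q"
  proof eventually_elim
    case (elim \<epsilon>)
    have "norm (\<Sum>n<K \<epsilon>. (A n \<epsilon> - B n \<epsilon>) * V \<epsilon> ^ n) \<le> (\<Sum>n<K \<epsilon>. \<rho> \<epsilon> ^ (q + P))"
      using elim(1) by (intro order_trans[OF norm_sum sum_mono]) (simp add: norm_mult norm_power)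
    also have "\<dots> \<le> inverse (\<rho> \<epsilon> ^ P) * \<rho> \<epsilon> ^ (q + P)"
      using elim by (simp add: mult_right_mono)
    also have "\<dots> = \<rho> \<epsilon> ^ q"
      using elim by (simp add: power_add)
    finally show ?case .
  qed
qed

lemma negligible_partial_sum_change:
  fixes A B :: "nat \<Rightarrow> real \<Rightarrow> complex" and W V :: "real \<Rightarrow> complex"
  assumes "ni_choice \<rho> ni" "moderate_over_hypersums \<rho> ni (\<lambda>n \<epsilon>. A n \<epsilon> * W \<epsilon> ^ n)"
    and "weakly_moderate \<rho> A" "rho_eq \<rho> W V" "strong_eq \<rho> A B" "rho_moderate \<rho> V" "hypernat \<rho> K"
  shows "rho_negligible \<rho> (\<lambda>\<epsilon>. \<Sum>n<K \<epsilon>. A n \<epsilon> * W \<epsilon> ^ n - B n \<epsilon> * V \<epsilon> ^ n)"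
proof -
  have "rho_negligible \<rho> (\<lambda>\<epsilon>. (\<Sum>n<K \<epsilon>. A n \<epsilon> * (W \<epsilon> ^ n - V \<epsilon> ^ n)) + (\<Sum>n<K \<epsilon>. (A n \<epsilon> - B n \<epsilon>) * V \<epsilon> ^ n))"
    using assms
    by (intro rho_negligible_add negligible_partial_sum_point_change negligible_partial_sum_coeff_change)
  then show ?thesis
    by (simp add: algebra_simps flip: sum.distrib sum_subtractf)
qed

lemma rt_lt_rho_eq:
  assumes "rt_lt \<rho> x y" "rho_eq \<rho> x' x"
  shows "rt_lt \<rho> x' y"
proof -
  obtain k where "\<forall>\<^sub>F \<epsilon> in at_right 0. y \<epsilon> - x \<epsilon> > \<rho> \<epsilon> ^ k"
    using assms(1) by (auto simp: rt_lt_def)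
  moreover have "\<forall>\<^sub>F \<epsilon> in at_right 0. \<bar>x' \<epsilon> - x \<epsilon>\<bar> \<le> \<rho> \<epsilon> ^ Suc k"
    using assms(2)[unfolded rho_eq_def rho_negligible_def, THEN spec, of "Suc k"] by simp
  ultimately have "\<forall>\<^sub>F \<epsilon> in at_right 0. y \<epsilon> - x' \<epsilon> > \<rho> \<epsilon> ^ Suc k"
    using two_rho_power_Suc_le[of k] by eventually_elim linarith
  then show ?thesis
    unfolding rt_lt_def by blast
qed

lemma hyperlim_rho_eq:
  assumes lim: "hyperlim \<rho> S l"
    and S: "\<And>N. hypernat \<rho> N \<Longrightarrow> rho_eq \<rho> (S' N) (S N)" and l: "rho_eq \<rho> l' l"
  shows "hyperlim \<rho> S' l'"
  unfolding hyperlim_def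
proof
  fix q
  obtain M where M: "hypernat \<rho> M" and M_lim: "\<And>N. hypernat \<rho> N \<Longrightarrow> rt_le \<rho> (\<lambda>\<epsilon>. real (M \<epsilon>)) (\<lambda>\<epsilon>. real (N \<epsilon>))
      \<Longrightarrow> rt_lt \<rho> (\<lambda>\<epsilon>. cmod (S N \<epsilon> - l \<epsilon>)) (\<lambda>\<epsilon>. \<rho> \<epsilon> ^ q)"
    using lim unfolding hyperlim_def by blast
  have "rt_lt \<rho> (\<lambda>\<epsilon>. cmod (S' N \<epsilon> - l' \<epsilon>)) (\<lambda>\<epsilon>. \<rho> \<epsilon> ^ q)"
    if "hypernat \<rho> N" "rt_le \<rho> (\<lambda>\<epsilon>. real (M \<epsilon>)) (\<lambda>\<epsilon>. real (N \<epsilon>))" for N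
    using M_lim[OF that] rho_eq_norm[OF rho_eq_diff[OF S[OF that(1)] l]] by (rule rt_lt_rho_eq)
  with M show "\<exists>M. hypernat \<rho> M \<and> (\<forall>N. hypernat \<rho> N \<longrightarrow> rt_le \<rho> (\<lambda>\<epsilon>. real (M \<epsilon>)) (\<lambda>\<epsilon>. real (N \<epsilon>))
      \<longrightarrow> rt_lt \<rho> (\<lambda>\<epsilon>. cmod (S' N \<epsilon> - l' \<epsilon>)) (\<lambda>\<epsilon>. \<rho> \<epsilon> ^ q))"
    by blast
qed

lemma conv_radius_strong_eq_diff_gt:
  fixes A B :: "nat \<Rightarrow> real \<Rightarrow> complex" and X :: "real \<Rightarrow> real"
  assumes AB: "strong_eq \<rho> A B" and X: "rho_moderate \<rho> X"
  shows "\<forall>\<^sub>F \<epsilon> in at_right 0. ereal (X \<epsilon>) < conv_radius (\<lambda>n. A n \<epsilon> - B n \<epsilon>)"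
proof -
  obtain N where N: "\<forall>\<^sub>F \<epsilon> in at_right 0. \<bar>X \<epsilon>\<bar> \<le> inverse (\<rho> \<epsilon> ^ N)"
    using X by (auto simp: rho_moderate_def)
  define u where "u \<epsilon> = inverse (\<rho> \<epsilon> ^ Suc N)" for \<epsilon>
  have "rho_moderate \<rho> u"
    unfolding rho_moderate_def u_def
    by (rule exI[of _ "Suc N"]) (use eventually_rho_pos_le_half in \<open>auto elim!: eventually_mono\<close>)
  from strong_eq_mult_power_le[OF AB this, of 1 0] N eventually_rho_pos_le_half
  show ?thesis
  proof eventually_elim
    case (elim \<epsilon>)
    have u: "0 < u \<epsilon>"
      using elim by (simp add: u_def)
    have "summable (\<lambda>n. (A n \<epsilon> - B n \<epsilon>) * complex_of_real (u \<epsilon>) ^ n)"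
      using elim u
      by (intro summable_geometric_majorant[of "\<rho> \<epsilon>" _ 1]) (auto simp: norm_mult norm_power)
    then have "ereal (u \<epsilon>) \<le> conv_radius (\<lambda>n. A n \<epsilon> - B n \<epsilon>)"
      using conv_radius_geI u by fastforce
    moreover have "X \<epsilon> < u \<epsilon>"
    proof -
      have "X \<epsilon> \<le> inverse (\<rho> \<epsilon> ^ N)"
        using elim(2) by simp
      also have "\<dots> < inverse (\<rho> \<epsilon> ^ Suc N)"
        using elim(3) by (simp add: field_simps)
      finally show ?thesis
        by (simp add: u_def)
    qed
    ultimately show ?case
      using order_less_le_trans[of "ereal (X \<epsilon>)" "ereal (u \<epsilon>)"] by simp
  qed
qed

lemma rt_lt_inf_conv_radius_strong_eq:
  fixes A B :: "nat \<Rightarrow> real \<Rightarrow> complex" and x :: "real \<Rightarrow> real"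
  assumes AB: "strong_eq \<rho> A B" and x: "rho_moderate \<rho> x"
    and A: "rt_lt_inf \<rho> x (\<lambda>\<epsilon>. conv_radius (\<lambda>n. A n \<epsilon>))"
  shows "rt_lt_inf \<rho> x (\<lambda>\<epsilon>. conv_radius (\<lambda>n. B n \<epsilon>))"
proof -
  obtain m where m: "\<forall>\<^sub>F \<epsilon> in at_right 0. ereal (x \<epsilon> + \<rho> \<epsilon> ^ m) < conv_radius (\<lambda>n. A n \<epsilon>)"
    using A by (auto simp: rt_lt_inf_def)
  have "rho_moderate \<rho> (\<lambda>\<epsilon>. \<rho> \<epsilon> ^ m)"
    unfolding rho_moderate_def
    by (rule exI[of _ 0]) (use eventually_rho_pos_le_half in \<open>auto elim!: eventually_mono simp: power_le_one\<close>)
  with x have "rho_moderate \<rho> (\<lambda>\<epsilon>. x \<epsilon> + \<rho> \<epsilon> ^ m)"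
    by (rule rho_moderate_add)
  from conv_radius_strong_eq_diff_gt[OF strong_eq_sym[OF AB] this] m
  have "\<forall>\<^sub>F \<epsilon> in at_right 0. ereal (x \<epsilon> + \<rho> \<epsilon> ^ m) < conv_radius (\<lambda>n. B n \<epsilon>)"
  proof eventually_elim
    case (elim \<epsilon>)
    then have "ereal (x \<epsilon> + \<rho> \<epsilon> ^ m) < min (conv_radius (\<lambda>n. A n \<epsilon>)) (conv_radius (\<lambda>n. B n \<epsilon> - A n \<epsilon>))"
      by simp
    also have "\<dots> \<le> conv_radius (\<lambda>n. A n \<epsilon> + (B n \<epsilon> - A n \<epsilon>))"
      by (rule conv_radius_add_ge)
    finally show ?case
      by simp
  qed
  then show ?thesis
    unfolding rt_lt_inf_def by blast
qed

lemma rt_lt_inf_conv_radius_change: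
  fixes A B :: "nat \<Rightarrow> real \<Rightarrow> complex" and W W' :: "real \<Rightarrow> complex"
  assumes "strong_eq \<rho> A B" "rho_moderate \<rho> W" "rho_eq \<rho> W' W"
    and "rt_lt_inf \<rho> (\<lambda>\<epsilon>. norm (W \<epsilon>)) (\<lambda>\<epsilon>. conv_radius (\<lambda>n. A n \<epsilon>))"
  shows "rt_lt_inf \<rho> (\<lambda>\<epsilon>. norm (W' \<epsilon>)) (\<lambda>\<epsilon>. conv_radius (\<lambda>n. B n \<epsilon>))"
  using assms(3) rt_lt_inf_conv_radius_strong_eq[OF assms(1) rho_moderate_norm[OF assms(2)] assms(4)]
  by (rule rt_lt_inf_norm_rho_eq)

lemma eventually_summable_of_rt_lt_inf:
  fixes A :: "nat \<Rightarrow> real \<Rightarrow> complex" and W :: "real \<Rightarrow> complex"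
  assumes "rt_lt_inf \<rho> (\<lambda>\<epsilon>. norm (W \<epsilon>)) (\<lambda>\<epsilon>. conv_radius (\<lambda>n. A n \<epsilon>))"
  shows "\<forall>\<^sub>F \<epsilon> in at_right 0. summable (\<lambda>n. A n \<epsilon> * W \<epsilon> ^ n)"
  using eventually_less_of_rt_lt_inf[OF assms] by eventually_elim (rule summable_in_conv_radius)

lemma negligible_series_of_geometric_bound:
  fixes t :: "nat \<Rightarrow> real \<Rightarrow> complex"
  assumes t: "\<And>r. \<forall>\<^sub>F \<epsilon> in at_right 0. \<forall>n. norm (t n \<epsilon>) \<le> \<rho> \<epsilon> ^ r * \<rho> \<epsilon> ^ n"
  shows "\<forall>\<^sub>F \<epsilon> in at_right 0. summable (\<lambda>n. t n \<epsilon>)"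
    and "rho_negligible \<rho> (\<lambda>\<epsilon>. \<Sum>n. t n \<epsilon>)"
proof -
  show "\<forall>\<^sub>F \<epsilon> in at_right 0. summable (\<lambda>n. t n \<epsilon>)"
    using t[of 0] eventually_rho_pos_le_half
    by eventually_elim (rule summable_geometric_majorant[of "\<rho> _" _ 1], auto)
  show "rho_negligible \<rho> (\<lambda>\<epsilon>. \<Sum>n. t n \<epsilon>)"
    unfolding rho_negligible_def
  proof
    fix q
    from t[of "Suc q"] two_rho_power_Suc_le[of q] eventually_rho_pos_le_half
    show "\<forall>\<^sub>F \<epsilon> in at_right 0. norm (\<Sum>n. t n \<epsilon>) \<le> \<rho> \<epsilon> ^ q"
    proof eventually_elim
      case (elim \<epsilon>)
      then have "norm (\<Sum>n. t n \<epsilon>) \<le> 2 * \<rho> \<epsilon> ^ Suc q"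
        by (intro norm_suminf_le_geometric_majorant[of "\<rho> \<epsilon>"]) auto
      with elim(2) show ?case
        by linarith
    qed
  qed
qed

lemma strong_eq_deriv_coeff_bound:
  fixes A B :: "nat \<Rightarrow> real \<Rightarrow> complex" and u :: "real \<Rightarrow> complex"
  assumes AB: "strong_eq \<rho> A B" and u: "rho_moderate \<rho> u"
  shows "\<forall>\<^sub>F \<epsilon> in at_right 0. \<forall>n. norm (of_nat (Suc n) * (A (Suc n) \<epsilon> - B (Suc n) \<epsilon>) * u \<epsilon> ^ n)
    \<le> \<rho> \<epsilon> ^ r * \<rho> \<epsilon> ^ n"
proof -
  define U where "U \<epsilon> = 1 + norm (u \<epsilon>)" for \<epsilon>
  have "rho_moderate \<rho> U"
    unfolding U_def
    by (rule rho_moderate_add) (use u in \<open>auto simp: rho_moderate_def intro!: exI[of _ 0]\<close>)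
  from strong_eq_mult_power_le[OF AB this, of 2 r] eventually_rho_pos_le_half
  show ?thesis
  proof eventually_elim
    case (elim \<epsilon>)
    show ?case
    proof
      fix n
      have "norm (u \<epsilon>) ^ n \<le> U \<epsilon> ^ n"
        by (intro power_mono) (simp_all add: U_def)
      also have "\<dots> \<le> U \<epsilon> ^ Suc n"
        unfolding U_def by (intro power_increasing) auto
      finally have "norm (u \<epsilon>) ^ n \<le> \<bar>U \<epsilon>\<bar> ^ Suc n"
        by (simp add: U_def)
      have "norm (of_nat (Suc n) * (A (Suc n) \<epsilon> - B (Suc n) \<epsilon>) * u \<epsilon> ^ n)
          = real (Suc n) * (cmod (A (Suc n) \<epsilon> - B (Suc n) \<epsilon>) * norm (u \<epsilon>) ^ n)"
        by (simp only: norm_mult norm_power norm_of_nat mult.assoc)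
      also have "\<dots> \<le> real (Suc n) * (cmod (A (Suc n) \<epsilon> - B (Suc n) \<epsilon>) * \<bar>U \<epsilon>\<bar> ^ Suc n)"
        using \<open>norm (u \<epsilon>) ^ n \<le> \<bar>U \<epsilon>\<bar> ^ Suc n\<close> by (intro mult_left_mono) auto
      also have "\<dots> \<le> real (Suc n) * \<rho> \<epsilon> ^ (Suc n * 2 + r)"
        by (rule mult_left_mono[OF elim(1)[rule_format, of "Suc n"]]) simp
      also have "\<dots> = (real (Suc n) * \<rho> \<epsilon> ^ n) * \<rho> \<epsilon> ^ 2 * (\<rho> \<epsilon> ^ r * \<rho> \<epsilon> ^ n)"
        by (simp add: power_add power_mult field_simps power2_eq_square)
      also have "\<dots> \<le> 1 * 1 * (\<rho> \<epsilon> ^ r * \<rho> \<epsilon> ^ n)"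
        using elim(2) Suc_mult_power_le_one[of "\<rho> \<epsilon>" n]
        by (intro mult_mono) (auto simp: power_le_one)
      finally show "norm (of_nat (Suc n) * (A (Suc n) \<epsilon> - B (Suc n) \<epsilon>) * u \<epsilon> ^ n) \<le> \<rho> \<epsilon> ^ r * \<rho> \<epsilon> ^ n"
        by simp
    qed
  qed
qed

text \<open>Condition (c) bounds the derivative series at every point negligibly close to
  \<open>Z - C\<close>, in particular at the points given by the mean value inequality.\<close>
lemma negligible_power_series_point_change:
  fixes A :: "nat \<Rightarrow> real \<Rightarrow> complex" and Z C V :: "real \<Rightarrow> complex"
  assumes c: "cond_c \<rho> A Z C"
    and margin: "rt_lt_inf \<rho> (\<lambda>\<epsilon>. norm (Z \<epsilon> - C \<epsilon>)) (\<lambda>\<epsilon>. conv_radius (\<lambda>n. A n \<epsilon>))"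
    and eq: "rho_eq \<rho> V (\<lambda>\<epsilon>. Z \<epsilon> - C \<epsilon>)"
  shows "rho_negligible \<rho> (\<lambda>\<epsilon>. (\<Sum>n. A n \<epsilon> * V \<epsilon> ^ n) - (\<Sum>n. A n \<epsilon> * (Z \<epsilon> - C \<epsilon>) ^ n))"
proof -
  define W where "W \<epsilon> = Z \<epsilon> - C \<epsilon>" for \<epsilon>
  obtain m where m: "\<forall>\<^sub>F \<epsilon> in at_right 0. ereal (norm (W \<epsilon>) + \<rho> \<epsilon> ^ m) < conv_radius (\<lambda>n. A n \<epsilon>)"
    using margin by (auto simp: rt_lt_inf_def W_def)
  obtain p where p_seg: "\<And>\<epsilon>. p \<epsilon> \<in> closed_segment (W \<epsilon>) (V \<epsilon>)"
    and p_bound: "\<And>\<epsilon>. ereal (norm (W \<epsilon>) + \<rho> \<epsilon> ^ m) \<le> conv_radius (\<lambda>n. A n \<epsilon>) \<Longrightarrow>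
      norm (V \<epsilon> - W \<epsilon>) < \<rho> \<epsilon> ^ m \<Longrightarrow>
      norm ((\<Sum>n. A n \<epsilon> * V \<epsilon> ^ n) - (\<Sum>n. A n \<epsilon> * W \<epsilon> ^ n))
        \<le> norm (\<Sum>n. diffs (\<lambda>n. A n \<epsilon>) n * p \<epsilon> ^ n) * norm (V \<epsilon> - W \<epsilon>)"
    by (rule power_series_mean_value_points[of W V "\<lambda>\<epsilon>. \<rho> \<epsilon> ^ m" A]) blast
  have VW: "rho_negligible \<rho> (\<lambda>\<epsilon>. V \<epsilon> - W \<epsilon>)"
    using eq by (simp add: rho_eq_def W_def)
  have "norm ((p \<epsilon> + C \<epsilon>) - Z \<epsilon>) \<le> norm (V \<epsilon> - W \<epsilon>)" for \<epsilon>
    using segment_bound1[OF p_seg[of \<epsilon>]] by (simp add: W_def algebra_simps)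
  then have "rho_negligible \<rho> (\<lambda>\<epsilon>. (p \<epsilon> + C \<epsilon>) - Z \<epsilon>)"
    by (intro rho_negligible_mono[OF VW] always_eventually allI)
  then have "rho_moderate \<rho> (\<lambda>\<epsilon>. \<Sum>n. of_nat (Suc n) * A (Suc n) \<epsilon> * ((p \<epsilon> + C \<epsilon>) - C \<epsilon>) ^ n)"
    using c[unfolded cond_c_def, rule_format, of "\<lambda>\<epsilon>. p \<epsilon> + C \<epsilon>"] by (simp add: rho_eq_def)
  then have "rho_negligible \<rho> (\<lambda>\<epsilon>. (\<Sum>n. diffs (\<lambda>n. A n \<epsilon>) n * p \<epsilon> ^ n) * (V \<epsilon> - W \<epsilon>))"
    using VW by (intro rho_negligible_mult_moderate) (simp_all add: diffs_def)
  moreover have "\<forall>\<^sub>F \<epsilon> in at_right 0. norm (V \<epsilon> - W \<epsilon>) < \<rho> \<epsilon> ^ m"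
    using VW[unfolded rho_negligible_def, THEN spec, of "Suc m"] eventually_rho_pos_le_half
    by eventually_elim (simp add: order_le_less_trans)
  with m have "\<forall>\<^sub>F \<epsilon> in at_right 0. norm ((\<Sum>n. A n \<epsilon> * V \<epsilon> ^ n) - (\<Sum>n. A n \<epsilon> * W \<epsilon> ^ n))
      \<le> norm ((\<Sum>n. diffs (\<lambda>n. A n \<epsilon>) n * p \<epsilon> ^ n) * (V \<epsilon> - W \<epsilon>))"
    by eventually_elim (simp add: p_bound norm_mult)
  ultimately show ?thesis
    unfolding W_def by (rule rho_negligible_mono)
qed

end

section \<open>Change of representatives\<close>

context
  fixes \<rho> :: "real \<Rightarrow> real"
    and ni :: "(real \<Rightarrow> nat) \<Rightarrow> (real \<Rightarrow> nat)"
    and A B :: "nat \<Rightarrow> real \<Rightarrow> complex"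
    and Z C Y D :: "real \<Rightarrow> complex"
  assumes gauge: "rho_gauge \<rho>"
    and ni: "ni_choice \<rho> ni"
    and A: "weakly_moderate \<rho> A"
    and AB: "strong_eq \<rho> A B"
    and Z: "rho_moderate \<rho> Z" and C: "rho_moderate \<rho> C"
    and Y: "rho_moderate \<rho> Y" and D: "rho_moderate \<rho> D"
    and YZ: "rho_eq \<rho> Y Z" and DC: "rho_eq \<rho> D C"
    and conds: "conds_abc \<rho> ni A Z C"
    and margin: "rt_lt_inf \<rho> (\<lambda>\<epsilon>. norm (Z \<epsilon> - C \<epsilon>)) (\<lambda>\<epsilon>. conv_radius (\<lambda>n. A n \<epsilon>))"
begin

lemma centered_point_rho_eq: "rho_eq \<rho> (\<lambda>\<epsilon>. Y \<epsilon> - D \<epsilon>) (\<lambda>\<epsilon>. Z \<epsilon> - C \<epsilon>)"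
  by (rule rho_eq_diff[OF gauge YZ DC])

lemma margin_at_changed_point: "rt_lt_inf \<rho> (\<lambda>\<epsilon>. norm (Y \<epsilon> - D \<epsilon>)) (\<lambda>\<epsilon>. conv_radius (\<lambda>n. A n \<epsilon>))"
  by (rule rt_lt_inf_norm_rho_eq[OF gauge centered_point_rho_eq margin])

lemma margin_changed: "rt_lt_inf \<rho> (\<lambda>\<epsilon>. norm (Y \<epsilon> - D \<epsilon>)) (\<lambda>\<epsilon>. conv_radius (\<lambda>n. B n \<epsilon>))"
  by (rule rt_lt_inf_conv_radius_change[OF gauge AB rho_moderate_diff[OF gauge Z C] centered_point_rho_eq margin])

lemma partial_sum_change_negligible:
  assumes "hypernat \<rho> K"
  shows "rho_negligible \<rho> (\<lambda>\<epsilon>. \<Sum>n<K \<epsilon>. A n \<epsilon> * (Z \<epsilon> - C \<epsilon>) ^ n - B n \<epsilon> * (Y \<epsilon> - D \<epsilon>) ^ n)"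
  using conds assms
  by (intro negligible_partial_sum_change[OF gauge ni _ A rho_eq_sym[OF centered_point_rho_eq] AB
        rho_moderate_diff[OF gauge Y D]])
     (simp_all add: conds_abc_def cond_a_def)

lemma hypersum_change_rho_eq:
  assumes N: "hypernat \<rho> N"
  shows "rho_eq \<rho> (hypersum ni (\<lambda>n \<epsilon>. B n \<epsilon> * (Y \<epsilon> - D \<epsilon>) ^ n) N)
    (hypersum ni (\<lambda>n \<epsilon>. A n \<epsilon> * (Z \<epsilon> - C \<epsilon>) ^ n) N)"
proof -
  have "hypernat \<rho> (\<lambda>\<epsilon>. Suc (ni N \<epsilon>))"
    by (intro hypernat_Suc hypernat_ni(1)[OF gauge ni N] gauge)
  from rho_negligible_minus[OF partial_sum_change_negligible[OF this]] show ?thesis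
    by (simp add: rho_eq_def hypersum_def sum_subtractf lessThan_Suc_atMost)
qed

lemma cond_a_changed: "cond_a \<rho> ni B Y D"
  unfolding cond_a_def moderate_over_hypersums_def
proof (intro allI impI)
  fix N
  assume N: "hypernat \<rho> N"
  have "rho_moderate \<rho> (hypersum ni (\<lambda>n \<epsilon>. A n \<epsilon> * (Z \<epsilon> - C \<epsilon>) ^ n) N)"
    using conds N by (simp add: conds_abc_def cond_a_def moderate_over_hypersums_def)
  then show "rho_moderate \<rho> (hypersum ni (\<lambda>n \<epsilon>. B n \<epsilon> * (Y \<epsilon> - D \<epsilon>) ^ n) N)"
    using hypersum_change_rho_eq[OF N] by (rule rho_moderate_rho_eq[OF gauge])
qed

lemma hs_eq_changed:
  "hs_eq \<rho> ni (\<lambda>n \<epsilon>. A n \<epsilon> * (Z \<epsilon> - C \<epsilon>) ^ n) (\<lambda>n \<epsilon>. B n \<epsilon> * (Y \<epsilon> - D \<epsilon>) ^ n)"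
  unfolding hs_eq_def
proof (intro allI impI)
  fix N M
  assume N: "hypernat \<rho> N" and M: "hypernat \<rho> M"
  define f where "f n \<epsilon> = A n \<epsilon> * (Z \<epsilon> - C \<epsilon>) ^ n - B n \<epsilon> * (Y \<epsilon> - D \<epsilon>) ^ n" for n \<epsilon>
  have "rho_negligible \<rho> (\<lambda>\<epsilon>. norm (\<Sum>n<Suc (ni M \<epsilon>). f n \<epsilon>) + norm (\<Sum>n<ni N \<epsilon>. f n \<epsilon>))"
    unfolding f_def
    by (intro rho_negligible_add rho_negligible_norm partial_sum_change_negligible
        hypernat_Suc hypernat_ni(1)[OF gauge ni] N M gauge)
  then have "rho_negligible \<rho> (\<lambda>\<epsilon>. \<Sum>n=ni N \<epsilon>..ni M \<epsilon>. f n \<epsilon>)"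
    by (rule rho_negligible_mono) (simp add: order_trans[OF norm_sum_atLeastAtMost_le])
  then show "rho_negligible \<rho> (\<lambda>\<epsilon>. \<Sum>n\<in>{ni N \<epsilon>..ni M \<epsilon>}. A n \<epsilon> * (Z \<epsilon> - C \<epsilon>) ^ n - B n \<epsilon> * (Y \<epsilon> - D \<epsilon>) ^ n)"
    by (simp add: f_def)
qed

lemma cond_c_changed: "cond_c \<rho> B Y D"
  unfolding cond_c_def
proof (intro allI impI conjI)
  fix y
  assume yY: "rho_eq \<rho> y Y"
  define y' where "y' \<epsilon> = y \<epsilon> - D \<epsilon> + C \<epsilon>" for \<epsilon>
  have "rho_eq \<rho> (\<lambda>\<epsilon>. y \<epsilon> - D \<epsilon>) (\<lambda>\<epsilon>. Z \<epsilon> - C \<epsilon>)"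
    by (rule rho_eq_diff[OF gauge rho_eq_trans[OF gauge yY YZ] DC])
  then have "rho_eq \<rho> y' Z"
    by (simp add: rho_eq_def y'_def algebra_simps)
  then have A_summable: "\<forall>\<^sub>F \<epsilon> in at_right 0. summable (\<lambda>n. of_nat (Suc n) * A (Suc n) \<epsilon> * (y \<epsilon> - D \<epsilon>) ^ n)"
    and A_moderate: "rho_moderate \<rho> (\<lambda>\<epsilon>. \<Sum>n. of_nat (Suc n) * A (Suc n) \<epsilon> * (y \<epsilon> - D \<epsilon>) ^ n)"
    using conds unfolding conds_abc_def cond_c_def by (auto simp: y'_def)
  have "rho_moderate \<rho> (\<lambda>\<epsilon>. y \<epsilon> - D \<epsilon>)"
    by (rule rho_moderate_diff[OF gauge rho_moderate_rho_eq[OF gauge Y yY] D])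
  then have "\<forall>\<^sub>F \<epsilon> in at_right 0. \<forall>n. norm (of_nat (Suc n) * (B (Suc n) \<epsilon> - A (Suc n) \<epsilon>) * (y \<epsilon> - D \<epsilon>) ^ n)
      \<le> \<rho> \<epsilon> ^ r * \<rho> \<epsilon> ^ n" for r
    by (rule strong_eq_deriv_coeff_bound[OF gauge strong_eq_sym[OF AB]])
  note diff_summable = negligible_series_of_geometric_bound(1)[OF gauge this]
    and diff_negligible = negligible_series_of_geometric_bound(2)[OF gauge this]
  have split: "of_nat (Suc n) * B (Suc n) \<epsilon> * (y \<epsilon> - D \<epsilon>) ^ n =
      of_nat (Suc n) * A (Suc n) \<epsilon> * (y \<epsilon> - D \<epsilon>) ^ n
      + of_nat (Suc n) * (B (Suc n) \<epsilon> - A (Suc n) \<epsilon>) * (y \<epsilon> - D \<epsilon>) ^ n" for n \<epsilon>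
    by (simp add: algebra_simps)
  show "\<forall>\<^sub>F \<epsilon> in at_right 0. summable (\<lambda>n. of_nat (Suc n) * B (Suc n) \<epsilon> * (y \<epsilon> - D \<epsilon>) ^ n)"
    using A_summable diff_summable by eventually_elim (unfold split, rule summable_add)
  have "rho_moderate \<rho> (\<lambda>\<epsilon>. (\<Sum>n. of_nat (Suc n) * A (Suc n) \<epsilon> * (y \<epsilon> - D \<epsilon>) ^ n)
      + (\<Sum>n. of_nat (Suc n) * (B (Suc n) \<epsilon> - A (Suc n) \<epsilon>) * (y \<epsilon> - D \<epsilon>) ^ n))"
    by (rule rho_moderate_add[OF gauge A_moderate rho_negligible_imp_moderate[OF diff_negligible]])
  moreover have "\<forall>\<^sub>F \<epsilon> in at_right 0. (\<Sum>n. of_nat (Suc n) * B (Suc n) \<epsilon> * (y \<epsilon> - D \<epsilon>) ^ n)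
      = (\<Sum>n. of_nat (Suc n) * A (Suc n) \<epsilon> * (y \<epsilon> - D \<epsilon>) ^ n)
        + (\<Sum>n. of_nat (Suc n) * (B (Suc n) \<epsilon> - A (Suc n) \<epsilon>) * (y \<epsilon> - D \<epsilon>) ^ n)"
    using A_summable diff_summable by eventually_elim (unfold split, rule suminf_add[symmetric])
  ultimately show "rho_moderate \<rho> (\<lambda>\<epsilon>. \<Sum>n. of_nat (Suc n) * B (Suc n) \<epsilon> * (y \<epsilon> - D \<epsilon>) ^ n)"
    by (rule rho_moderate_eventually_eq)
qed

lemma suminf_change_negligible:
  "rho_negligible \<rho> (\<lambda>\<epsilon>. (\<Sum>n. B n \<epsilon> * (Y \<epsilon> - D \<epsilon>) ^ n) - (\<Sum>n. A n \<epsilon> * (Z \<epsilon> - C \<epsilon>) ^ n))"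
proof -
  from strong_eq_mult_power_le[OF gauge strong_eq_sym[OF AB] rho_moderate_norm[OF rho_moderate_diff[OF gauge Y D]], of 1]
  have "\<forall>\<^sub>F \<epsilon> in at_right 0. \<forall>n. norm ((B n \<epsilon> - A n \<epsilon>) * (Y \<epsilon> - D \<epsilon>) ^ n) \<le> \<rho> \<epsilon> ^ r * \<rho> \<epsilon> ^ n" for r
    by (rule eventually_mono) (simp add: norm_mult norm_power power_add mult.commute)
  then have coeff_change: "rho_negligible \<rho> (\<lambda>\<epsilon>. \<Sum>n. (B n \<epsilon> - A n \<epsilon>) * (Y \<epsilon> - D \<epsilon>) ^ n)"
    by (rule negligible_series_of_geometric_bound(2)[OF gauge])
  have point_change: "rho_negligible \<rho> (\<lambda>\<epsilon>. (\<Sum>n. A n \<epsilon> * (Y \<epsilon> - D \<epsilon>) ^ n) - (\<Sum>n. A n \<epsilon> * (Z \<epsilon> - C \<epsilon>) ^ n))"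
    using conds by (intro negligible_power_series_point_change[OF gauge _ margin centered_point_rho_eq])
      (simp add: conds_abc_def)
  have "\<forall>\<^sub>F \<epsilon> in at_right 0. (\<Sum>n. B n \<epsilon> * (Y \<epsilon> - D \<epsilon>) ^ n) - (\<Sum>n. A n \<epsilon> * (Z \<epsilon> - C \<epsilon>) ^ n)
      = (\<Sum>n. (B n \<epsilon> - A n \<epsilon>) * (Y \<epsilon> - D \<epsilon>) ^ n)
        + ((\<Sum>n. A n \<epsilon> * (Y \<epsilon> - D \<epsilon>) ^ n) - (\<Sum>n. A n \<epsilon> * (Z \<epsilon> - C \<epsilon>) ^ n))"
    using eventually_summable_of_rt_lt_inf[OF gauge margin_changed]
      eventually_summable_of_rt_lt_inf[OF gauge margin_at_changed_point]
    by eventually_elim (simp add: suminf_diff[symmetric] algebra_simps)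
  with rho_negligible_add[OF gauge coeff_change point_change] show ?thesis
    by (rule rho_negligible_eventually_eq)
qed

lemma cond_b_changed: "cond_b \<rho> ni B Y D"
  unfolding cond_b_def
proof (intro conjI)
  show "\<forall>\<^sub>F \<epsilon> in at_right 0. summable (\<lambda>n. B n \<epsilon> * (Y \<epsilon> - D \<epsilon>) ^ n)"
    by (rule eventually_summable_of_rt_lt_inf[OF gauge margin_changed])
  have moderate: "rho_moderate \<rho> (\<lambda>\<epsilon>. \<Sum>n. A n \<epsilon> * (Z \<epsilon> - C \<epsilon>) ^ n)"
    and lim: "hyperlim \<rho> (hypersum ni (\<lambda>n \<epsilon>. A n \<epsilon> * (Z \<epsilon> - C \<epsilon>) ^ n)) (\<lambda>\<epsilon>. \<Sum>n. A n \<epsilon> * (Z \<epsilon> - C \<epsilon>) ^ n)"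
    using conds by (simp_all add: conds_abc_def cond_b_def)
  have sum_eq: "rho_eq \<rho> (\<lambda>\<epsilon>. \<Sum>n. B n \<epsilon> * (Y \<epsilon> - D \<epsilon>) ^ n) (\<lambda>\<epsilon>. \<Sum>n. A n \<epsilon> * (Z \<epsilon> - C \<epsilon>) ^ n)"
    using suminf_change_negligible by (simp add: rho_eq_def)
  show "rho_moderate \<rho> (\<lambda>\<epsilon>. \<Sum>n. B n \<epsilon> * (Y \<epsilon> - D \<epsilon>) ^ n)"
    by (rule rho_moderate_rho_eq[OF gauge moderate sum_eq])
  show "hyperlim \<rho> (hypersum ni (\<lambda>n \<epsilon>. B n \<epsilon> * (Y \<epsilon> - D \<epsilon>) ^ n)) (\<lambda>\<epsilon>. \<Sum>n. B n \<epsilon> * (Y \<epsilon> - D \<epsilon>) ^ n)"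
    by (rule hyperlim_rho_eq[OF gauge lim hypersum_change_rho_eq sum_eq])
qed

lemma conds_abc_changed:
  "conds_abc \<rho> ni B Y D \<and> hs_eq \<rho> ni (\<lambda>n \<epsilon>. A n \<epsilon> * (Z \<epsilon> - C \<epsilon>) ^ n) (\<lambda>n \<epsilon>. B n \<epsilon> * (Y \<epsilon> - D \<epsilon>) ^ n)"
  using cond_a_changed cond_b_changed cond_c_changed hs_eq_changed by (simp add: conds_abc_def)

end

theorem theorem2p27:
  fixes \<rho> :: "real \<Rightarrow> real"
    and ni :: "(real \<Rightarrow> nat) \<Rightarrow> (real \<Rightarrow> nat)"
    and a ah :: "nat \<Rightarrow> real \<Rightarrow> complex"
    and z zh c ch :: "real \<Rightarrow> complex"
  assumes "rho_gauge \<rho>"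
    and "ni_choice \<rho> ni"
    and "weakly_moderate \<rho> a" and "weakly_moderate \<rho> ah" and "strong_eq \<rho> a ah"
    and "rho_moderate \<rho> z" and "rho_moderate \<rho> zh" and "rho_eq \<rho> z zh"
    and "rho_moderate \<rho> c" and "rho_moderate \<rho> ch" and "rho_eq \<rho> c ch"
    and "in_conv_set \<rho> ni a z c"
  shows "conds_abc \<rho> ni a z c \<and> conds_abc \<rho> ni ah zh ch
         \<and> hs_eq \<rho> ni (\<lambda>n \<epsilon>. a n \<epsilon> * (z \<epsilon> - c \<epsilon>) ^ n) (\<lambda>n \<epsilon>. ah n \<epsilon> * (zh \<epsilon> - ch \<epsilon>) ^ n)"
proof -
  note gauge = assms(1) and ni = assms(2) and a_ah = assms(5)
    and z = assms(6) and zh = assms(7) and z_zh = assms(8)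
    and c = assms(9) and ch = assms(10) and c_ch = assms(11)
  obtain a' z' c' where a': "weakly_moderate \<rho> a'" and a_a': "strong_eq \<rho> a a'"
    and z': "rho_moderate \<rho> z'" and z_z': "rho_eq \<rho> z z'"
    and c': "rho_moderate \<rho> c'" and c_c': "rho_eq \<rho> c c'" and conds': "conds_abc \<rho> ni a' z' c'"
    using assms(12) unfolding in_conv_set_def by blast
  have "rt_lt_inf \<rho> (\<lambda>\<epsilon>. norm (z \<epsilon> - c \<epsilon>)) (\<lambda>\<epsilon>. conv_radius (\<lambda>n. a n \<epsilon>))"
    using assms(12) by (simp add: in_conv_set_def rad_eq_conv_radius)
  then have margin': "rt_lt_inf \<rho> (\<lambda>\<epsilon>. norm (z' \<epsilon> - c' \<epsilon>)) (\<lambda>\<epsilon>. conv_radius (\<lambda>n. a' n \<epsilon>))"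
    by (rule rt_lt_inf_conv_radius_change[OF gauge a_a' rho_moderate_diff[OF gauge z c]
          rho_eq_diff[OF gauge rho_eq_sym rho_eq_sym, OF z_z' c_c']])
  have "conds_abc \<rho> ni a z c \<and> hs_eq \<rho> ni (\<lambda>n \<epsilon>. a' n \<epsilon> * (z' \<epsilon> - c' \<epsilon>) ^ n) (\<lambda>n \<epsilon>. a n \<epsilon> * (z \<epsilon> - c \<epsilon>) ^ n)"
    by (rule conds_abc_changed[OF gauge ni a' strong_eq_sym[OF a_a'] z' c' z c z_z' c_c' conds' margin'])
  moreover have "conds_abc \<rho> ni ah zh ch \<and> hs_eq \<rho> ni (\<lambda>n \<epsilon>. a' n \<epsilon> * (z' \<epsilon> - c' \<epsilon>) ^ n) (\<lambda>n \<epsilon>. ah n \<epsilon> * (zh \<epsilon> - ch \<epsilon>) ^ n)"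
    using rho_eq_trans[OF gauge rho_eq_sym[OF z_zh] z_z'] rho_eq_trans[OF gauge rho_eq_sym[OF c_ch] c_c']
      strong_eq_trans[OF gauge strong_eq_sym[OF a_a'] a_ah]
    by (intro conds_abc_changed[OF gauge ni a' _ z' c' zh ch _ _ conds' margin'])
  ultimately show ?thesis
    using hs_eq_trans[OF gauge hs_eq_sym] by blast
qed

end
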